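(* For every $n\ge1$ there exists a bijection $\varphi:\mathfrak{S}_n(3124,3214)\to\mathfrak{S}_n(3142,3241)$ such that for every $\pi\in\mathfrak{S}_n(3124,3214)$, $$(\mathrm{Br},\mathrm{Ides},\mathrm{Lrmax},\mathrm{Lrmin},\mathrm{Iar})(\pi)=(\mathrm{Br},\mathrm{Ides},\mathrm{Lrmax},\mathrm{Lrmin},\mathrm{Iar})(\varphi(\pi)).$$
   Context: $\mathfrak{S}_n$ is the set of permutations of $[n]$ written as words $\pi_1\cdots\pi_n$; $\pi$ contains a pattern $P$ (a permutation of $[k]$) if some subsequence $\pi_{i_1}\cdots\pi_{i_k}$, $i_1<\dots<i_k$, is order-isomorphic to $P$, otherwise it avoids $P$; $\mathfrak{S}_n(P_1,\dots,P_r)$ is the set of permutations avoiding all $P_i$. Statistics: $\mathrm{Ides}(\pi)=\{i\in[n-1]:\pi^{-1}(i)>\pi^{-1}(i+1)\}$; $\mathrm{Lrmax}(\pi)$ (resp. $\mathrm{Lrmin}(\pi)$) is the set of letters $\pi_i$ greater (resp. smaller) than all letters to their left; $\mathrm{Iar}(\pi)=\{\pi_1,\dots,\pi_m\}$ with $m$ maximal such that $\pi_1<\dots<\pi_m$. With the convention $\pi_0=\pi_{n+1}=0$, the peak set is $\mathrm{Pk}(\pi)=\{\pi_i:1\le i\le n,\ \pi_{i-1}<\pi_i>\pi_{i+1}\}$, and $\mathrm{Br}(\pi)=\mathrm{Lrmax}(\pi)\cap\mathrm{Pk}(\pi)$. *)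

theory Defs
  imports Main
begin

text \<open>Permutations of [n] as words: lists of length n with distinct entries from {1..n}.
  List positions are 0-based here; position i (0-based) corresponds to pi_(i+1).\<close>

definition perms :: "nat \<Rightarrow> nat list set" where
  "perms n = {p. distinct p \<and> set p = {1..n}}"

definition contains :: "nat list \<Rightarrow> nat list \<Rightarrow> bool" where
  "contains p P \<longleftrightarrow> (\<exists>idx. length idx = length P \<and> sorted_wrt (<) idx
      \<and> (\<forall>i\<in>set idx. i < length p)
      \<and> (\<forall>a<length P. \<forall>b<length P. (p ! (idx ! a) < p ! (idx ! b)) \<longleftrightarrow> (P ! a < P ! b)))"

definition avoids_all :: "nat \<Rightarrow> nat list list \<Rightarrow> nat list set" where
  "avoids_all n Ps = {p \<in> perms n. \<forall>P\<in>set Ps. \<not> contains p P}"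

text \<open>pi^{-1}(x), as a 0-based position\<close>
definition pos :: "nat list \<Rightarrow> nat \<Rightarrow> nat" where
  "pos p x = (LEAST i. i < length p \<and> p ! i = x)"

definition Ides :: "nat list \<Rightarrow> nat set" where
  "Ides p = {i. 1 \<le> i \<and> i \<le> length p - 1 \<and> pos p i > pos p (i + 1)}"

definition Lrmax :: "nat list \<Rightarrow> nat set" where
  "Lrmax p = {p ! i | i. i < length p \<and> (\<forall>j<i. p ! j < p ! i)}"

definition Lrmin :: "nat list \<Rightarrow> nat set" where
  "Lrmin p = {p ! i | i. i < length p \<and> (\<forall>j<i. p ! j > p ! i)}"

text \<open>Iar: the initial ascending run pi_1 < ... < pi_m with m maximal.\<close>
definition Iar :: "nat list \<Rightarrow> nat set" where
  "Iar p = {p ! i | i. i < length p \<and> (\<forall>j<i. p ! j < p ! (j + 1))}"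

text \<open>Letter at 0-based position i, with the convention pi_0 = pi_(n+1) = 0.\<close>
definition ent :: "nat list \<Rightarrow> int \<Rightarrow> nat" where
  "ent p i = (if 0 \<le> i \<and> i < int (length p) then p ! nat i else 0)"

definition Pk :: "nat list \<Rightarrow> nat set" where
  "Pk p = {p ! i | i. i < length p \<and> ent p (int i - 1) < p ! i \<and> p ! i > ent p (int i + 1)}"

definition Br :: "nat list \<Rightarrow> nat set" where
  "Br p = Lrmax p \<inter> Pk p"

end

theory Submission
  imports Defs
begin

text \<open>Both classes are closed under deleting the largest letter, so each member of size n + 1 arises
  from exactly one member s of size n by inserting n + 1 into one of the active sites of s. The five
  statistics of the result depend only on those of s and on the type of the site: the largest letter
  l before the site, and whether l is the letter immediately before it. For either class the active
  sites of s are mapped bijectively onto the same set of types, a set determined by the statistics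
  of s alone. By induction on n, the two classes therefore contain equally many permutations with
  any given statistics, and matching the fibres of the statistics gives the bijection.\<close>

section \<open>Permutations as words\<close>

lemma length_perms: "p \<in> perms n \<Longrightarrow> length p = n"
  unfolding perms_def using distinct_card by fastforce

lemma permsD:
  assumes "s \<in> perms n"
  shows "length s = n" "distinct s" "\<And>i. i < n \<Longrightarrow> 1 \<le> s!i" "\<And>i. i < n \<Longrightarrow> s!i \<le> n"
  using assms length_perms[OF assms] nth_mem[of _ s] unfolding perms_def by auto

lemma perms_nth_inj: "s \<in> perms n \<Longrightarrow> i < n \<Longrightarrow> j < n \<Longrightarrow> s!i = s!j \<Longrightarrow> i = j"
  using permsD nth_eq_iff_index_eq by metis

lemma perms_finite: "finite (perms n)"
proof -
  have "perms n \<subseteq> {xs. set xs \<subseteq> {1..n} \<and> length xs = n}" using length_perms unfolding perms_def by auto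
  then show ?thesis using finite_lists_length_eq[of "{1..n}" n] finite_subset by auto
qed

lemma pos_nth: "distinct xs \<Longrightarrow> i < length xs \<Longrightarrow> pos xs (xs!i) = i"
  unfolding pos_def
  by (rule Least_equality) (auto simp: nth_eq_iff_index_eq)

lemma pos_perms:
  assumes s: "s \<in> perms n" and v: "1 \<le> v" "v \<le> n"
  shows "pos s v < n" "s ! (pos s v) = v"
proof -
  have "v \<in> set s" using s v unfolding perms_def by auto
  then obtain p where p: "p < length s" "s!p = v" by (auto simp: in_set_conv_nth)
  hence "pos s v = p" using pos_nth[of s p] permsD[OF s] by auto
  thus "pos s v < n" "s ! (pos s v) = v" using p permsD[OF s] by auto
qed

lemma Ides_sub: "s \<in> perms n \<Longrightarrow> x \<in> Ides s \<Longrightarrow> 1 \<le> x \<and> x < n"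
  unfolding Ides_def using permsD by fastforce

lemma Ides_finite: "finite (Ides s)"
  unfolding Ides_def by (rule finite_subset[of _ "{..length s}"]) auto

definition lrmax_at :: "nat list \<Rightarrow> nat \<Rightarrow> bool" where
  "lrmax_at s i \<longleftrightarrow> i < length s \<and> (\<forall>j<i. s!j < s!i)"
definition lrmin_at :: "nat list \<Rightarrow> nat \<Rightarrow> bool" where
  "lrmin_at s i \<longleftrightarrow> i < length s \<and> (\<forall>j<i. s!j > s!i)"
definition iar_at :: "nat list \<Rightarrow> nat \<Rightarrow> bool" where
  "iar_at s i \<longleftrightarrow> i < length s \<and> (\<forall>j<i. s!j < s!(Suc j))"

lemma Lrmax_eq_lrmax_at: "Lrmax s = {s!i | i. lrmax_at s i}"
  unfolding Lrmax_def lrmax_at_def by blast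
lemma Lrmin_eq_lrmin_at: "Lrmin s = {s!i | i. lrmin_at s i}"
  unfolding Lrmin_def lrmin_at_def by blast
lemma Iar_eq_iar_at: "Iar s = {s!i | i. iar_at s i}"
  unfolding Iar_def iar_at_def by simp

lemma lrmax_at_less: "lrmax_at s i \<Longrightarrow> lrmax_at s j \<Longrightarrow> i < j \<Longrightarrow> s!i < s!j"
  unfolding lrmax_at_def by auto

lemma lrmax_at_less_rev: "lrmax_at s i \<Longrightarrow> lrmax_at s j \<Longrightarrow> s!i < s!j \<Longrightarrow> i < j"
  unfolding lrmax_at_def by (metis linorder_neqE_nat order_less_asym)

lemma lrmax_at_pos: "s \<in> perms n \<Longrightarrow> x \<in> Lrmax s \<Longrightarrow> lrmax_at s (pos s x) \<and> s!(pos s x) = x"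
proof -
  assume s: "s \<in> perms n" "x \<in> Lrmax s"
  then obtain i where i: "x = s!i" "lrmax_at s i" unfolding Lrmax_eq_lrmax_at by blast
  hence "pos s x = i" using pos_nth permsD[OF s(1)] unfolding lrmax_at_def by metis
  thus ?thesis using i by simp
qed

lemma lrmax_at_in_Lrmax: "lrmax_at s i \<Longrightarrow> s!i \<in> Lrmax s"
  unfolding Lrmax_eq_lrmax_at by blast

lemma set_take_nth: "t \<le> length s \<Longrightarrow> set (take t s) = (\<lambda>i. s!i) ` {i. i < t}"
  by (auto simp: set_conv_nth image_iff) (metis nth_take order_less_le_trans)+

lemma ent_R: "ent s (int i + 1) = (if Suc i < length s then s!(Suc i) else 0)"
proof -
  have "nat (int i + 1) = Suc i" by (metis Suc_as_int nat_int)
  thus ?thesis unfolding ent_def by auto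
qed
lemma ent_L: "i < length s \<Longrightarrow> ent s (int i - 1) = (if i = 0 then 0 else s!(i-1))"
  unfolding ent_def by (auto simp: nat_diff_distrib)

lemma Br_pos:
  assumes s: "s \<in> perms n"
  shows "Br s = {s!i | i. lrmax_at s i \<and> (Suc i < length s \<longrightarrow> s!(Suc i) < s!i)}"
proof -
  note pf = permsD[OF s]
  have pk: "\<And>i. lrmax_at s i \<Longrightarrow> s!i \<in> Pk s \<longleftrightarrow> (Suc i < length s \<longrightarrow> s!(Suc i) < s!i)"
  proof -
    fix i assume l: "lrmax_at s i"
    hence il: "i < length s" unfolding lrmax_at_def by simp
    have L: "ent s (int i - 1) < s!i"
    proof (cases "i = 0")
      case True
      have "1 \<le> s!0" using pf il True by auto
      then show ?thesis using ent_L[OF il] True by simp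
    next
      case False then show ?thesis using ent_L[OF il] l unfolding lrmax_at_def by auto
    qed
    show "s!i \<in> Pk s \<longleftrightarrow> (Suc i < length s \<longrightarrow> s!(Suc i) < s!i)"
    proof
      assume "s!i \<in> Pk s"
      then obtain i' where i': "s!i = s!i'" "i' < length s" "ent s (int i' + 1) < s!i'" unfolding Pk_def by blast
      hence "i' = i" using perms_nth_inj[OF s] il pf by metis
      then show "Suc i < length s \<longrightarrow> s!(Suc i) < s!i" using i' ent_R by auto
    next
      assume "Suc i < length s \<longrightarrow> s!(Suc i) < s!i"
      moreover have "1 \<le> s!i" using pf il by auto
      ultimately have "ent s (int i + 1) < s!i" using ent_R[of s i] by auto
      then show "s!i \<in> Pk s" unfolding Pk_def using L il by blast
    qed
  qed
  show ?thesis unfolding Br_def Lrmax_eq_lrmax_at using pk by blast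
qed

section \<open>The two pattern classes\<close>

text \<open>Since all letters are distinct, avoiding both 3124 and 3214 means that no letter is followed by
  two smaller letters and then by a larger one; similarly for 3142 and 3241.\<close>

definition avoids_A :: "nat list \<Rightarrow> bool" where
  "avoids_A p \<longleftrightarrow> \<not>(\<exists>i j k l. i<j \<and> j<k \<and> k<l \<and> l<length p \<and> p!j < p!i \<and> p!k < p!i \<and> p!i < p!l)"
definition avoids_B :: "nat list \<Rightarrow> bool" where
  "avoids_B p \<longleftrightarrow> \<not>(\<exists>i j k l. i<j \<and> j<k \<and> k<l \<and> l<length p \<and> p!j < p!i \<and> p!l < p!i \<and> p!i < p!k)"

lemma all_less_four: "(\<forall>a<(4::nat). P a) \<longleftrightarrow> P 0 \<and> P 1 \<and> P 2 \<and> P 3"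
  by (auto simp: numeral_eq_Suc All_less_Suc2)

lemma contains_length_four:
  assumes "length P = 4"
  shows "contains p P \<longleftrightarrow> (\<exists>i j k l. i<j \<and> j<k \<and> k<l \<and> l<length p \<and>
     (\<forall>a<4. \<forall>b<4. ([p!i,p!j,p!k,p!l]!a < [p!i,p!j,p!k,p!l]!b) = (P!a < P!b)))"
proof
  assume "contains p P"
  then obtain idx where h: "length idx = length P" "sorted_wrt (<) idx" "\<forall>i\<in>set idx. i < length p"
     "\<forall>a<length P. \<forall>b<length P. (p ! (idx ! a) < p ! (idx ! b)) \<longleftrightarrow> (P ! a < P ! b)"
    unfolding contains_def by blast
  then obtain i j k l where idx: "idx = [i,j,k,l]" using assms
    by (cases idx; cases "tl idx"; cases "tl (tl idx)"; cases "tl (tl (tl idx))"; auto simp: numeral_eq_Suc)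
  show "\<exists>i j k l. i<j \<and> j<k \<and> k<l \<and> l<length p \<and>
     (\<forall>a<4. \<forall>b<4. ([p!i,p!j,p!k,p!l]!a < [p!i,p!j,p!k,p!l]!b) = (P!a < P!b))"
    apply (rule exI[of _ i], rule exI[of _ j], rule exI[of _ k], rule exI[of _ l])
    using h assms unfolding idx by (auto simp: all_less_four)
next
  assume "\<exists>i j k l. i<j \<and> j<k \<and> k<l \<and> l<length p \<and>
     (\<forall>a<4. \<forall>b<4. ([p!i,p!j,p!k,p!l]!a < [p!i,p!j,p!k,p!l]!b) = (P!a < P!b))"
  then obtain i j k l where h: "i<j" "j<k" "k<l" "l<length p"
     "\<forall>a<4. \<forall>b<4. ([p!i,p!j,p!k,p!l]!a < [p!i,p!j,p!k,p!l]!b) = (P!a < P!b)" by blast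
  show "contains p P" unfolding contains_def
    apply (rule exI[of _ "[i,j,k,l]"])
    using h assms by (auto simp: all_less_four)
qed

lemma contains_3124: "contains p [3,1,2,4] \<longleftrightarrow> (\<exists>i j k l. i<j \<and> j<k \<and> k<l \<and> l<length p \<and> p!j < p!k \<and> p!k < p!i \<and> p!i < p!l)"
  apply (rule iffI)
   apply (subst (asm) contains_length_four, simp)
   apply (simp add: all_less_four, blast)
  apply (elim exE conjE)
  subgoal for i j k l unfolding contains_def
    apply (rule exI[of _ "[i,j,k,l]"])
    by (auto simp: less_Suc_eq)
  done
lemma contains_3214: "contains p [3,2,1,4] \<longleftrightarrow> (\<exists>i j k l. i<j \<and> j<k \<and> k<l \<and> l<length p \<and> p!k < p!j \<and> p!j < p!i \<and> p!i < p!l)"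
  apply (rule iffI)
   apply (subst (asm) contains_length_four, simp)
   apply (simp add: all_less_four, blast)
  apply (elim exE conjE)
  subgoal for i j k l unfolding contains_def
    apply (rule exI[of _ "[i,j,k,l]"])
    by (auto simp: less_Suc_eq)
  done
lemma contains_3142: "contains p [3,1,4,2] \<longleftrightarrow> (\<exists>i j k l. i<j \<and> j<k \<and> k<l \<and> l<length p \<and> p!j < p!l \<and> p!l < p!i \<and> p!i < p!k)"
  apply (rule iffI)
   apply (subst (asm) contains_length_four, simp)
   apply (simp add: all_less_four, blast)
  apply (elim exE conjE)
  subgoal for i j k l unfolding contains_def
    apply (rule exI[of _ "[i,j,k,l]"])
    by (auto simp: less_Suc_eq)
  done
lemma contains_3241: "contains p [3,2,4,1] \<longleftrightarrow> (\<exists>i j k l. i<j \<and> j<k \<and> k<l \<and> l<length p \<and> p!l < p!j \<and> p!j < p!i \<and> p!i < p!k)"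
  apply (rule iffI)
   apply (subst (asm) contains_length_four, simp)
   apply (simp add: all_less_four, blast)
  apply (elim exE conjE)
  subgoal for i j k l unfolding contains_def
    apply (rule exI[of _ "[i,j,k,l]"])
    by (auto simp: less_Suc_eq)
  done

lemma avoids_all_A_iff: "p \<in> avoids_all n [[3,1,2,4],[3,2,1,4]] \<longleftrightarrow> p \<in> perms n \<and> avoids_A p"
proof -
  have "p \<in> perms n \<Longrightarrow> (contains p [3,1,2,4] \<or> contains p [3,2,1,4]) \<longleftrightarrow> \<not> avoids_A p"
  proof -
    assume "p \<in> perms n"
    hence d: "distinct p" by (simp add: perms_def)
    show ?thesis unfolding contains_3124 contains_3214 avoids_A_def
    proof (rule iffI)
      assume "(\<exists>i j k l. i<j \<and> j<k \<and> k<l \<and> l<length p \<and> p!j < p!k \<and> p!k < p!i \<and> p!i < p!l) \<or>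
              (\<exists>i j k l. i<j \<and> j<k \<and> k<l \<and> l<length p \<and> p!k < p!j \<and> p!j < p!i \<and> p!i < p!l)"
      then show "\<not>\<not>(\<exists>i j k l. i<j \<and> j<k \<and> k<l \<and> l<length p \<and> p!j < p!i \<and> p!k < p!i \<and> p!i < p!l)"
        by (meson order.strict_trans)
    next
      assume "\<not>\<not>(\<exists>i j k l. i<j \<and> j<k \<and> k<l \<and> l<length p \<and> p!j < p!i \<and> p!k < p!i \<and> p!i < p!l)"
      then obtain i j k l where h: "i<j" "j<k" "k<l" "l<length p" "p!j < p!i" "p!k < p!i" "p!i < p!l" by blast
      have "p!j \<noteq> p!k" using nth_eq_iff_index_eq[OF d, of j k] h by auto
      then show "(\<exists>i j k l. i<j \<and> j<k \<and> k<l \<and> l<length p \<and> p!j < p!k \<and> p!k < p!i \<and> p!i < p!l) \<or>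
              (\<exists>i j k l. i<j \<and> j<k \<and> k<l \<and> l<length p \<and> p!k < p!j \<and> p!j < p!i \<and> p!i < p!l)"
        using h by (metis linorder_neqE_nat)
    qed
  qed
  thus ?thesis unfolding avoids_all_def by auto
qed

lemma avoids_all_B_iff: "p \<in> avoids_all n [[3,1,4,2],[3,2,4,1]] \<longleftrightarrow> p \<in> perms n \<and> avoids_B p"
proof -
  have "p \<in> perms n \<Longrightarrow> (contains p [3,1,4,2] \<or> contains p [3,2,4,1]) \<longleftrightarrow> \<not> avoids_B p"
  proof -
    assume "p \<in> perms n"
    hence d: "distinct p" by (simp add: perms_def)
    show ?thesis unfolding contains_3142 contains_3241 avoids_B_def
    proof (rule iffI)
      assume "(\<exists>i j k l. i<j \<and> j<k \<and> k<l \<and> l<length p \<and> p!j < p!l \<and> p!l < p!i \<and> p!i < p!k) \<or>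
              (\<exists>i j k l. i<j \<and> j<k \<and> k<l \<and> l<length p \<and> p!l < p!j \<and> p!j < p!i \<and> p!i < p!k)"
      then show "\<not>\<not>(\<exists>i j k l. i<j \<and> j<k \<and> k<l \<and> l<length p \<and> p!j < p!i \<and> p!l < p!i \<and> p!i < p!k)"
        by (meson order.strict_trans)
    next
      assume "\<not>\<not>(\<exists>i j k l. i<j \<and> j<k \<and> k<l \<and> l<length p \<and> p!j < p!i \<and> p!l < p!i \<and> p!i < p!k)"
      then obtain i j k l where h: "i<j" "j<k" "k<l" "l<length p" "p!j < p!i" "p!l < p!i" "p!i < p!k" by blast
      have "p!j \<noteq> p!l" using nth_eq_iff_index_eq[OF d, of j l] h by auto
      then show "(\<exists>i j k l. i<j \<and> j<k \<and> k<l \<and> l<length p \<and> p!j < p!l \<and> p!l < p!i \<and> p!i < p!k) \<or>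
              (\<exists>i j k l. i<j \<and> j<k \<and> k<l \<and> l<length p \<and> p!l < p!j \<and> p!j < p!i \<and> p!i < p!k)"
        using h by (metis linorder_neqE_nat)
    qed
  qed
  thus ?thesis unfolding avoids_all_def by auto
qed

section \<open>Inserting the maximum\<close>

definition insert_at :: "nat \<Rightarrow> nat list \<Rightarrow> nat \<Rightarrow> nat list" where
  "insert_at N s t = take t s @ N # drop t s"

lemma length_insert_at[simp]: "t \<le> length s \<Longrightarrow> length (insert_at N s t) = Suc (length s)"
  by (simp add: insert_at_def)

lemma nth_insert_at: "t \<le> length s \<Longrightarrow> insert_at N s t ! i = (if i < t then s!i else if i = t then N else s!(i-1))"
  unfolding insert_at_def
  by (auto simp: nth_append min_def nth_Cons' not_less)

lemma set_insert_at: "set (insert_at N s t) = insert N (set s)"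
proof -
  have "set (take t s) \<union> set (drop t s) = set s" by (metis append_take_drop_id set_append)
  thus ?thesis unfolding insert_at_def by simp
qed

lemma distinct_insert_at: "distinct s \<Longrightarrow> N \<notin> set s \<Longrightarrow> distinct (insert_at N s t)"
proof -
  assume d: "distinct s" and N: "N \<notin> set s"
  have "set (take t s) \<inter> set (drop t s) = {}" using d by (metis append_take_drop_id distinct_append)
  thus ?thesis using d using N unfolding insert_at_def by (auto dest: in_set_takeD in_set_dropD)
qed

lemma insert_at_inj:
  assumes "N \<notin> set s" "N \<notin> set s'" "t \<le> length s" "t' \<le> length s'" "insert_at N s t = insert_at N s' t'"
  shows "s = s' \<and> t = t'"
proof -
  have "t = t'"
  proof (rule ccontr)
    assume "t \<noteq> t'"
    then consider "t < t'" | "t' < t" by linarith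
    then show False
    proof cases
      case 1
      have "insert_at N s' t' ! t = N" using assms 1 nth_insert_at[of t s N t]
        by simp
      moreover have "insert_at N s' t' ! t = s' ! t" using nth_insert_at[of t' s' N t] assms 1 by simp
      ultimately show False using assms 1 by (metis nth_mem order_less_le_trans)
    next
      case 2
      have "insert_at N s t ! t' = N" using assms 2 nth_insert_at[of t' s' N t'] by simp
      moreover have "insert_at N s t ! t' = s ! t'" using nth_insert_at[of t s N t'] assms 2 by simp
      ultimately show False using assms 2 by (metis nth_mem order_less_le_trans)
    qed
  qed
  moreover have "s = s'"
  proof -
    have "take t s @ drop t s = take t s' @ drop t s'"
      using assms \<open>t = t'\<close> unfolding insert_at_def
      by (metis append_eq_append_conv length_take min.absorb2 list.inject)
    thus ?thesis by simp
  qed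
  ultimately show ?thesis by simp
qed

lemma insert_at_perms: "s \<in> perms n \<Longrightarrow> insert_at (Suc n) s t \<in> perms (Suc n)"
  unfolding perms_def using set_insert_at distinct_insert_at by auto

lemma perms_Suc_insert_at:
  assumes "q \<in> perms (Suc n)"
  shows "\<exists>s t. s \<in> perms n \<and> t \<le> n \<and> q = insert_at (Suc n) s t"
proof -
  have d: "distinct q" and st: "set q = {1..Suc n}" using assms unfolding perms_def by auto
  have "Suc n \<in> set q" using st by auto
  then obtain xs ys where q: "q = xs @ Suc n # ys" by (meson split_list)
  let ?s = "xs @ ys"
  have "distinct ?s" using d q by auto
  moreover have "set ?s = set q - {Suc n}" using d q by auto
  moreover have "{1..Suc n} - {Suc n} = {1..n}" by auto
  ultimately have "set ?s = {1..n}" using st by simp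
  hence sp: "?s \<in> perms n" using \<open>distinct ?s\<close> unfolding perms_def by simp
  have "length xs \<le> n" using sp length_perms by fastforce
  moreover have "q = insert_at (Suc n) ?s (length xs)" unfolding insert_at_def q by simp
  ultimately show ?thesis using sp by blast
qed

text \<open>Site t of s, for t \<le> n, is the gap in front of position t. It is active for a class if inserting
  n + 1 there keeps a member of the class inside it (avoids_A_insert_at, avoids_B_insert_at).\<close>

definition active_A :: "nat list \<Rightarrow> nat \<Rightarrow> bool" where
  "active_A s t \<longleftrightarrow> \<not>(\<exists>i j k. i<j \<and> j<k \<and> k<t \<and> s!j<s!i \<and> s!k<s!i)"

definition active_B :: "nat list \<Rightarrow> nat \<Rightarrow> nat \<Rightarrow> bool" where
  "active_B s n t \<longleftrightarrow> \<not>(\<exists>i j l. i<j \<and> j<t \<and> t\<le>l \<and> l<n \<and> s!j<s!i \<and> s!l<s!i)"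

locale insertion =
  fixes s :: "nat list" and n t :: nat
  assumes s: "s \<in> perms n" and t: "t \<le> n"
begin

lemma nth_insert_at_perms: "insert_at (Suc n) s t ! i = (if i < t then s!i else if i = t then Suc n else s!(i-1))"
  using nth_insert_at length_perms s t by metis

lemma insert_at_perms_simps:
  "length (insert_at (Suc n) s t) = Suc n"
    "\<And>i. i < t \<Longrightarrow> insert_at (Suc n) s t ! i = s!i"
    "insert_at (Suc n) s t ! t = Suc n"
    "\<And>i. t \<le> i \<Longrightarrow> insert_at (Suc n) s t ! (Suc i) = s!i"
  using nth_insert_at_perms permsD[OF s] t by auto

lemma nth_insert_at_skip: "x < n \<Longrightarrow> insert_at (Suc n) s t ! (if x < t then x else Suc x) = s!x"
  using nth_insert_at_perms by simp

lemma nth_insert_at_unskip: "x \<noteq> t \<Longrightarrow> insert_at (Suc n) s t ! x = s ! (if x < t then x else x - 1)"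
  using nth_insert_at_perms by simp

lemma nth_insert_at_le: "x < Suc n \<Longrightarrow> insert_at (Suc n) s t ! x \<le> Suc n"
  using permsD(4)[OF insert_at_perms[OF s]] by simp

lemma avoids_of_insert_at_A:
  assumes q: "avoids_A (insert_at (Suc n) s t)"
  shows "avoids_A s" "active_A s t"
proof -
  let ?q = "insert_at (Suc n) s t" and ?f = "\<lambda>x. if x < t then x else Suc x"
  note len = permsD(1)[OF s] insert_at_perms_simps(1)
  show "avoids_A s" unfolding avoids_A_def
  proof
    assume "\<exists>i j k l. i<j \<and> j<k \<and> k<l \<and> l<length s \<and> s!j < s!i \<and> s!k < s!i \<and> s!i < s!l"
    then obtain i j k l where h: "i<j" "j<k" "k<l" "l<length s" "s!j < s!i" "s!k < s!i" "s!i < s!l" by blast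
    have "?f i < ?f j" "?f j < ?f k" "?f k < ?f l" "?f l < length ?q" using h len by auto
    moreover have "?q!(?f j) < ?q!(?f i)" "?q!(?f k) < ?q!(?f i)" "?q!(?f i) < ?q!(?f l)"
      using h nth_insert_at_skip len by auto
    ultimately show False using q unfolding avoids_A_def by blast
  qed
  show "active_A s t" unfolding active_A_def
  proof
    assume "\<exists>i j k. i<j \<and> j<k \<and> k<t \<and> s!j<s!i \<and> s!k<s!i"
    then obtain i j k where h: "i<j" "j<k" "k<t" "s!j<s!i" "s!k<s!i" by blast
    have "?q!i = s!i" "?q!j = s!j" "?q!k = s!k" "?q!t = Suc n" "t < length ?q"
      using h insert_at_perms_simps t by auto
    moreover have "s!i < Suc n" using permsD(4)[OF s, of i] h t by simp
    ultimately show False using q h unfolding avoids_A_def by metis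
  qed
qed

lemma avoids_insert_at_A:
  assumes "avoids_A s" "active_A s t"
  shows "avoids_A (insert_at (Suc n) s t)"
  unfolding avoids_A_def
proof
  let ?q = "insert_at (Suc n) s t" and ?g = "\<lambda>x. if x < t then x else x - 1"
  assume "\<exists>i j k l. i<j \<and> j<k \<and> k<l \<and> l<length ?q \<and> ?q!j < ?q!i \<and> ?q!k < ?q!i \<and> ?q!i < ?q!l"
  then obtain i j k l where h: "i<j" "j<k" "k<l" "l<length ?q" "?q!j < ?q!i" "?q!k < ?q!i" "?q!i < ?q!l"
    by blast
  have "l < Suc n" using h insert_at_perms_simps(1) by simp
  then have "?q!i \<le> Suc n" "?q!j \<le> Suc n" "?q!k \<le> Suc n" "?q!l \<le> Suc n"
    using nth_insert_at_le h by simp_all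
  \<comment> \<open>only the last letter of an occurrence can be the maximum n + 1\<close>
  then have "i \<noteq> t" "j \<noteq> t" "k \<noteq> t" using h insert_at_perms_simps(3) by auto
  show False
  proof (cases "l = t")
    case True
    then show False using assms(2) h insert_at_perms_simps \<open>i \<noteq> t\<close> \<open>j \<noteq> t\<close> \<open>k \<noteq> t\<close>
      unfolding active_A_def by auto
  next
    case False
    have "?g i < ?g j" "?g j < ?g k" "?g k < ?g l" "?g l < length s"
      using h False \<open>l < Suc n\<close> \<open>i \<noteq> t\<close> \<open>j \<noteq> t\<close> \<open>k \<noteq> t\<close> permsD(1)[OF s] t by auto
    moreover have "s!(?g j) < s!(?g i)" "s!(?g k) < s!(?g i)" "s!(?g i) < s!(?g l)"
      using h False nth_insert_at_unskip \<open>i \<noteq> t\<close> \<open>j \<noteq> t\<close> \<open>k \<noteq> t\<close> by auto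
    ultimately show False using assms(1) unfolding avoids_A_def by blast
  qed
qed

lemma avoids_A_insert_at: "avoids_A (insert_at (Suc n) s t) \<longleftrightarrow> avoids_A s \<and> active_A s t"
  using avoids_of_insert_at_A avoids_insert_at_A by blast

lemma avoids_of_insert_at_B:
  assumes q: "avoids_B (insert_at (Suc n) s t)"
  shows "avoids_B s" "active_B s n t"
proof -
  let ?q = "insert_at (Suc n) s t" and ?f = "\<lambda>x. if x < t then x else Suc x"
  note len = permsD(1)[OF s] insert_at_perms_simps(1)
  show "avoids_B s" unfolding avoids_B_def
  proof
    assume "\<exists>i j k l. i<j \<and> j<k \<and> k<l \<and> l<length s \<and> s!j < s!i \<and> s!l < s!i \<and> s!i < s!k"
    then obtain i j k l where h: "i<j" "j<k" "k<l" "l<length s" "s!j < s!i" "s!l < s!i" "s!i < s!k" by blast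
    have "?f i < ?f j" "?f j < ?f k" "?f k < ?f l" "?f l < length ?q" using h len by auto
    moreover have "?q!(?f j) < ?q!(?f i)" "?q!(?f l) < ?q!(?f i)" "?q!(?f i) < ?q!(?f k)"
      using h nth_insert_at_skip len by auto
    ultimately show False using q unfolding avoids_B_def by blast
  qed
  show "active_B s n t" unfolding active_B_def
  proof
    assume "\<exists>i j l. i<j \<and> j<t \<and> t\<le>l \<and> l<n \<and> s!j<s!i \<and> s!l<s!i"
    then obtain i j l where h: "i<j" "j<t" "t\<le>l" "l<n" "s!j<s!i" "s!l<s!i" by blast
    have "?q!i = s!i" "?q!j = s!j" "?q!(Suc l) = s!l" "?q!t = Suc n" "Suc l < length ?q"
      using h insert_at_perms_simps by auto
    moreover have "s!i < Suc n" using permsD(4)[OF s, of i] h t by simp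
    moreover have "t < Suc l" using h by simp
    ultimately show False using q h unfolding avoids_B_def by metis
  qed
qed

lemma avoids_insert_at_B:
  assumes "avoids_B s" "active_B s n t"
  shows "avoids_B (insert_at (Suc n) s t)"
  unfolding avoids_B_def
proof
  let ?q = "insert_at (Suc n) s t" and ?g = "\<lambda>x. if x < t then x else x - 1"
  assume "\<exists>i j k l. i<j \<and> j<k \<and> k<l \<and> l<length ?q \<and> ?q!j < ?q!i \<and> ?q!l < ?q!i \<and> ?q!i < ?q!k"
  then obtain i j k l where h: "i<j" "j<k" "k<l" "l<length ?q" "?q!j < ?q!i" "?q!l < ?q!i" "?q!i < ?q!k"
    by blast
  have "l < Suc n" using h insert_at_perms_simps(1) by simp
  then have "?q!i \<le> Suc n" "?q!j \<le> Suc n" "?q!k \<le> Suc n" "?q!l \<le> Suc n"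
    using nth_insert_at_le h by simp_all
  then have "i \<noteq> t" "j \<noteq> t" "l \<noteq> t" using h insert_at_perms_simps(3) by auto
  show False
  proof (cases "k = t")
    case True
    then have "i < t" "j < t" "?q!i = s!i" "?q!j = s!j" using h insert_at_perms_simps by auto
    moreover have "s!(l-1) < s!i" "t \<le> l - 1" "l - 1 < n" using h True calculation nth_insert_at_perms \<open>l < Suc n\<close>
      by auto
    ultimately show False using assms(2) h unfolding active_B_def by auto
  next
    case False
    have "?g i < ?g j" "?g j < ?g k" "?g k < ?g l" "?g l < length s"
      using h False \<open>l < Suc n\<close> \<open>i \<noteq> t\<close> \<open>j \<noteq> t\<close> \<open>l \<noteq> t\<close> permsD(1)[OF s] t by auto
    moreover have "s!(?g j) < s!(?g i)" "s!(?g l) < s!(?g i)" "s!(?g i) < s!(?g k)"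
      using h False nth_insert_at_unskip \<open>i \<noteq> t\<close> \<open>j \<noteq> t\<close> \<open>l \<noteq> t\<close> by auto
    ultimately show False using assms(1) unfolding avoids_B_def by blast
  qed
qed

lemma avoids_B_insert_at: "avoids_B (insert_at (Suc n) s t) \<longleftrightarrow> avoids_B s \<and> active_B s n t"
  using avoids_of_insert_at_B avoids_insert_at_B by blast

lemma lrmax_at_insert_at:
  "lrmax_at (insert_at (Suc n) s t) i \<longleftrightarrow> (i < t \<and> lrmax_at s i) \<or> i = t"
proof -
  note q = insert_at_perms_simps
  note pf = permsD[OF s]
  consider "i < t" | "i = t" | "t < i" by linarith
  then show ?thesis
  proof cases
    case 1
    have e: "\<And>j. j \<le> i \<Longrightarrow> insert_at (Suc n) s t ! j = s!j" using q(2) 1 by simp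
    have "i < n" "i < Suc n" using 1 t by auto
    then show ?thesis unfolding lrmax_at_def using e 1 q(1) pf(1) by simp
  next
    case 2
    have e: "\<And>j. j < i \<Longrightarrow> insert_at (Suc n) s t ! j < Suc n" using q(2) 2 pf t
      by (metis le_imp_less_Suc order_less_le_trans)
    have "lrmax_at (insert_at (Suc n) s t) i" unfolding lrmax_at_def using q(1,3) t 2 e by auto
    then show ?thesis using 2 by blast
  next
    case 3
    then obtain i' where i': "i = Suc i'" "t \<le> i'" by (cases i) auto
    show ?thesis
    proof (cases "i < Suc n")
      case True
      hence "insert_at (Suc n) s t ! i \<le> n" using q pf i' by auto
      moreover have "insert_at (Suc n) s t ! t = Suc n" using q by auto
      ultimately show ?thesis unfolding lrmax_at_def using 3 by force
    next
      case False then show ?thesis unfolding lrmax_at_def using q 3 by auto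
    qed
  qed
qed

lemma Lrmax_insert_at:
  "Lrmax (insert_at (Suc n) s t) = insert (Suc n) {s!i | i. i < t \<and> lrmax_at s i}"
proof -
  note q = insert_at_perms_simps
  show ?thesis unfolding Lrmax_eq_lrmax_at lrmax_at_insert_at
  proof (rule set_eqI, rule iffI)
    fix x assume "x \<in> {insert_at (Suc n) s t ! i |i. i < t \<and> lrmax_at s i \<or> i = t}"
    then obtain i where "x = insert_at (Suc n) s t ! i" "i < t \<and> lrmax_at s i \<or> i = t" by blast
    then show "x \<in> insert (Suc n) {s ! i |i. i < t \<and> lrmax_at s i}" using q by auto
  next
    fix x assume "x \<in> insert (Suc n) {s ! i |i. i < t \<and> lrmax_at s i}"
    then consider "x = Suc n" | i where "x = s!i" "i < t" "lrmax_at s i" by blast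
    then show "x \<in> {insert_at (Suc n) s t ! i |i. i < t \<and> lrmax_at s i \<or> i = t}"
    proof cases
      case 1 then show ?thesis using q(3) by (metis (mono_tags, lifting) mem_Collect_eq)
    next
      case 2 then show ?thesis using q(2)[of i] by (metis (mono_tags, lifting) mem_Collect_eq)
    qed
  qed
qed

lemma all_greater_insert_at:
  assumes "t \<le> i" "i < n"
  shows "(\<forall>j<Suc i. insert_at (Suc n) s t ! j > insert_at (Suc n) s t ! Suc i) \<longleftrightarrow> (\<forall>j<i. s!j > s!i)"
    (is "(\<forall>j<Suc i. ?q!j > ?q!(Suc i)) \<longleftrightarrow> _")
proof
  assume h: "\<forall>j<Suc i. ?q!j > ?q!(Suc i)"
  show "\<forall>j<i. s!j > s!i"
  proof (intro allI impI)
    fix j assume "j < i"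
    show "s!j > s!i"
    proof (cases "j < t")
      case True
      then show ?thesis using h[rule_format, of j] insert_at_perms_simps(2)[of j] insert_at_perms_simps(4)[OF assms(1)] \<open>j < i\<close> by simp
    next
      case False
      then have "?q ! Suc j = s!j" using insert_at_perms_simps(4) by simp
      then show ?thesis using h[rule_format, of "Suc j"] insert_at_perms_simps(4)[OF assms(1)] \<open>j < i\<close> by simp
    qed
  qed
next
  assume h: "\<forall>j<i. s!j > s!i"
  show "\<forall>j<Suc i. ?q!j > ?q!(Suc i)"
  proof (intro allI impI)
    fix j assume "j < Suc i"
    consider "j < t" | "j = t" | "t < j" by linarith
    then show "?q!j > ?q!(Suc i)"
    proof cases
      case 1
      then show ?thesis using h insert_at_perms_simps assms(1) \<open>j < Suc i\<close> by auto
    next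
      case 2
      then show ?thesis using insert_at_perms_simps assms(1) permsD(4)[OF s assms(2)] by (simp add: le_imp_less_Suc)
    next
      case 3
      then obtain j' where "j = Suc j'" "t \<le> j'" by (cases j) auto
      then show ?thesis using h insert_at_perms_simps assms(1) \<open>j < Suc i\<close> by auto
    qed
  qed
qed

lemma lrmin_at_insert_at_Suc:
  assumes "t \<le> i"
  shows "lrmin_at (insert_at (Suc n) s t) (Suc i) \<longleftrightarrow> lrmin_at s i"
  using all_greater_insert_at[OF assms] permsD(1)[OF s] insert_at_perms_simps(1)
  unfolding lrmin_at_def by (cases "i < n") auto

lemma lrmin_at_insert_at:
  "lrmin_at (insert_at (Suc n) s t) i \<longleftrightarrow>
     (i < t \<and> lrmin_at s i) \<or> (i = t \<and> t = 0) \<or> (\<exists>i'. i = Suc i' \<and> t \<le> i' \<and> lrmin_at s i')"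
proof -
  note q = insert_at_perms_simps
  note pf = permsD[OF s]
  consider "i < t" | "i = t" | "t < i" by linarith
  then show ?thesis
  proof cases
    case 1
    then show ?thesis unfolding lrmin_at_def using q pf t by auto
  next
    case 2
    have "t \<noteq> 0 \<Longrightarrow> insert_at (Suc n) s t ! 0 = s!0 \<and> s!0 \<le> n" using q pf t by auto
    then show ?thesis using 2 q unfolding lrmin_at_def by (cases "t = 0") auto
  next
    case 3
    then obtain i' where "i = Suc i'" "t \<le> i'" by (cases i) auto
    then show ?thesis using lrmin_at_insert_at_Suc 3 by auto
  qed
qed

lemma Lrmin_insert_at:
  "Lrmin (insert_at (Suc n) s t) = Lrmin s \<union> (if t = 0 then {Suc n} else {})"
proof -
  note q = insert_at_perms_simps
  let ?q = "insert_at (Suc n) s t"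
  have I: "{i. lrmin_at ?q i} = {i. i<t \<and> lrmin_at s i} \<union> (if t=0 then {t} else {}) \<union> Suc ` {i. t \<le> i \<and> lrmin_at s i}"
    using lrmin_at_insert_at by auto
  have "(\<lambda>i. ?q!i) ` {i. lrmin_at ?q i} = (\<lambda>i. s!i) ` {i. i<t \<and> lrmin_at s i} \<union> (if t = 0 then {Suc n} else {})
      \<union> (\<lambda>i. s!i) ` {i. t \<le> i \<and> lrmin_at s i}"
    unfolding I image_Un image_image using q by (auto simp: image_iff)
  also have "\<dots> = (\<lambda>i. s!i) ` {i. lrmin_at s i} \<union> (if t = 0 then {Suc n} else {})"
    by (auto simp: image_iff) (metis not_le)
  finally show ?thesis unfolding Lrmin_eq_lrmin_at setcompr_eq_image .
qed

lemma ascending_prefix_insert_at: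
  "(\<forall>j<t. insert_at (Suc n) s t ! j < insert_at (Suc n) s t ! Suc j) \<longleftrightarrow> (\<forall>j. Suc j < t \<longrightarrow> s!j < s!(Suc j))"
proof -
  let ?q = "insert_at (Suc n) s t"
  note q = insert_at_perms_simps
  have inner: "?q!j < ?q!(Suc j) \<longleftrightarrow> s!j < s!(Suc j)" if "Suc j < t" for j
    using q(2)[of j] q(2)[of "Suc j"] that by simp
  have last: "?q!j < ?q!(Suc j)" if "Suc j = t" for j
    using q(2)[of j] q(3) permsD(4)[OF s, of j] that t by simp
  show ?thesis
  proof (intro iffI allI impI)
    fix j assume "\<forall>j<t. ?q!j < ?q!(Suc j)" "Suc j < t"
    then show "s!j < s!(Suc j)" using inner by simp
  next
    fix j assume "\<forall>j. Suc j < t \<longrightarrow> s!j < s!(Suc j)" "j < t"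
    then show "?q!j < ?q!(Suc j)" using inner last by (cases "Suc j = t") auto
  qed
qed

lemma iar_at_insert_at:
  "iar_at (insert_at (Suc n) s t) i \<longleftrightarrow> (i < t \<and> iar_at s i) \<or> (i = t \<and> (\<forall>j. Suc j < t \<longrightarrow> s!j < s!(Suc j)))"
proof -
  note q = insert_at_perms_simps
  note pf = permsD[OF s]
  let ?q = "insert_at (Suc n) s t"
  consider "i < t" | "i = t" | "t < i" by linarith
  then show ?thesis
  proof cases
    case 1
    have "?q ! j = s!j" "?q ! Suc j = s! Suc j" if "j < i" for j using q(2) 1 that by simp_all
    then show ?thesis unfolding iar_at_def using 1 t q(1) pf(1) by simp
  next
    case 2
    then show ?thesis unfolding iar_at_def using ascending_prefix_insert_at q(1) t by auto
  next
    case 3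
    have "\<not> iar_at ?q i"
    proof
      assume "iar_at ?q i"
      then have "?q!t < ?q!(Suc t)" "i < Suc n" unfolding iar_at_def using 3 q by auto
      moreover have "t < n" using 3 calculation by simp
      ultimately show False using pf q by fastforce
    qed
    then show ?thesis using 3 by auto
  qed
qed

lemma Iar_insert_at:
  "Iar (insert_at (Suc n) s t) = (if (\<forall>j. Suc j < t \<longrightarrow> s!j < s!(Suc j)) then insert (Suc n) (set (take t s)) else Iar s)"
proof -
  note q = insert_at_perms_simps
  note pf = permsD[OF s]
  let ?q = "insert_at (Suc n) s t"
  let ?inc = "\<forall>j. Suc j < t \<longrightarrow> s!j < s!(Suc j)"
  have I: "{i. iar_at ?q i} = {i. i<t \<and> iar_at s i} \<union> (if ?inc then {t} else {})"
    using iar_at_insert_at by auto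
  have "Iar ?q = (\<lambda>i. s!i) ` {i. i<t \<and> iar_at s i} \<union> (if ?inc then {Suc n} else {})"
    unfolding Iar_eq_iar_at setcompr_eq_image I image_Un using q by (auto simp: image_iff)
  moreover have "?inc \<Longrightarrow> {i. i<t \<and> iar_at s i} = {i. i < t}"
    unfolding iar_at_def using t pf by auto
  moreover have "\<not> ?inc \<Longrightarrow> {i. i<t \<and> iar_at s i} = {i. iar_at s i}"
  proof -
    assume "\<not> ?inc"
    then obtain j0 where j0: "Suc j0 < t" "\<not> s!j0 < s!(Suc j0)" by blast
    have "iar_at s i \<Longrightarrow> i < t" for i
    proof (rule ccontr)
      assume "iar_at s i" "\<not> i < t"
      then show False using j0 unfolding iar_at_def by auto
    qed
    then show ?thesis by auto
  qed
  ultimately show ?thesis using set_take_nth[of t s] pf t unfolding Iar_eq_iar_at setcompr_eq_image by auto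
qed

lemma pos_insert_at:
  "\<And>v. 1 \<le> v \<Longrightarrow> v \<le> n \<Longrightarrow> pos (insert_at (Suc n) s t) v = (if pos s v < t then pos s v else Suc (pos s v))"
    "pos (insert_at (Suc n) s t) (Suc n) = t"
proof -
  note q = insert_at_perms_simps
  have dq: "distinct (insert_at (Suc n) s t)" using insert_at_perms[OF s] unfolding perms_def by auto
  show "pos (insert_at (Suc n) s t) (Suc n) = t" using pos_nth[OF dq, of t] q t by simp
  fix v assume v: "1 \<le> v" "v \<le> n"
  note pp = pos_perms[OF s v]
  show "pos (insert_at (Suc n) s t) v = (if pos s v < t then pos s v else Suc (pos s v))"
  proof (cases "pos s v < t")
    case True
    then show ?thesis using pos_nth[OF dq, of "pos s v"] q pp t by simp
  next
    case False
    then show ?thesis using pos_nth[OF dq, of "Suc (pos s v)"] q pp t by simp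
  qed
qed

lemma Ides_insert_at:
  assumes n: "1 \<le> n"
  shows "Ides (insert_at (Suc n) s t) = Ides s \<union> (if t \<le> pos s n then {n} else {})"
proof -
  note q = insert_at_perms_simps
  note pf = permsD[OF s]
  let ?q = "insert_at (Suc n) s t"
  define f where "f = (\<lambda>x::nat. if x < t then x else Suc x)"
  have fm: "\<And>x y. f x < f y \<longleftrightarrow> x < y" unfolding f_def by auto
  have pq: "\<And>v. 1 \<le> v \<Longrightarrow> v \<le> n \<Longrightarrow> pos ?q v = f (pos s v)" using pos_insert_at unfolding f_def by auto
  show ?thesis
  proof (rule set_eqI)
    fix i
    show "i \<in> Ides ?q \<longleftrightarrow> i \<in> Ides s \<union> (if t \<le> pos s n then {n} else {})"
    proof (cases "1 \<le> i \<and> i < n")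
      case True
      have "pos ?q i = f (pos s i)" "pos ?q (Suc i) = f (pos s (Suc i))" using pq True by auto
      then show ?thesis unfolding Ides_def using True fm q pf by auto
    next
      case False
      show ?thesis
      proof (cases "i = n")
        case True
        have "pos ?q n = f (pos s n)" using pq n by auto
        moreover have "pos ?q (Suc n) = t" using pos_insert_at by simp
        ultimately have "i \<in> Ides ?q \<longleftrightarrow> t < f (pos s n)" unfolding Ides_def using True q n by auto
        also have "\<dots> \<longleftrightarrow> t \<le> pos s n" unfolding f_def by auto
        finally show ?thesis using True Ides_sub[OF s, of n] by auto
      next
        case F2: False
        have "i \<notin> Ides ?q" unfolding Ides_def using False F2 q by auto
        moreover have "i \<notin> Ides s" using Ides_sub[OF s, of i] False by auto
        ultimately show ?thesis using F2 by auto
      qed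
    qed
  qed
qed

lemma Br_insert_at:
  "Br (insert_at (Suc n) s t) = insert (Suc n) {s!i | i. Suc i < t \<and> lrmax_at s i \<and> s!(Suc i) < s!i}"
proof -
  note q = insert_at_perms_simps
  note pf = permsD[OF s]
  let ?q = "insert_at (Suc n) s t"
  have c: "lrmax_at ?q i \<and> (Suc i < length ?q \<longrightarrow> ?q!(Suc i) < ?q!i) \<longleftrightarrow>
      (Suc i < t \<and> lrmax_at s i \<and> s!(Suc i) < s!i) \<or> i = t" for i
  proof (cases "i = t")
    case True
    have "Suc t < Suc n \<Longrightarrow> ?q!(Suc t) < ?q!t" using q pf by (simp add: le_imp_less_Suc)
    then show ?thesis using True lrmax_at_insert_at q by auto
  next
    case False
    show ?thesis
    proof (cases "i < t")
      case True
      show ?thesis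
      proof (cases "Suc i = t")
        case True
        have "?q!i < ?q!(Suc i)" using True q pf t \<open>i<t\<close> by (simp add: le_imp_less_Suc)
        then show ?thesis using True \<open>i<t\<close> q t by auto
      next
        case False
        then show ?thesis using \<open>i<t\<close> lrmax_at_insert_at q t \<open>i \<noteq> t\<close> by auto
      qed
    next
      case False
      then show ?thesis using lrmax_at_insert_at \<open>i \<noteq> t\<close> by auto
    qed
  qed
  have "Br ?q = (\<lambda>i. ?q!i) ` {i. (Suc i < t \<and> lrmax_at s i \<and> s!(Suc i) < s!i) \<or> i = t}"
    unfolding Br_pos[OF insert_at_perms[OF s]] setcompr_eq_image c ..
  also have "{i. (Suc i < t \<and> lrmax_at s i \<and> s!(Suc i) < s!i) \<or> i = t} = insert t {i. Suc i < t \<and> lrmax_at s i \<and> s!(Suc i) < s!i}"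
    by auto
  also have "(\<lambda>i. ?q!i) ` insert t {i. Suc i < t \<and> lrmax_at s i \<and> s!(Suc i) < s!i} = insert (Suc n) ((\<lambda>i. s!i) ` {i. Suc i < t \<and> lrmax_at s i \<and> s!(Suc i) < s!i})"
    unfolding image_insert q(3) using q(2) by (intro arg_cong[where f="insert _"] image_cong) auto
  finally show ?thesis unfolding setcompr_eq_image .
qed

end

section \<open>Site types\<close>

type_synonym stat = "nat set \<times> nat set \<times> nat set \<times> nat set \<times> nat set"

definition stats :: "nat list \<Rightarrow> stat" where
  "stats p = (Br p, Ides p, Lrmax p, Lrmin p, Iar p)"

text \<open>The type of site t of s: None for t = 0, otherwise Some (l, b) where l is the largest of the
  first t letters and b tells whether l is the last of them. Together with the statistics of s it
  determines the statistics after inserting n + 1 at t.\<close>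

definition site_type :: "nat list \<Rightarrow> nat \<Rightarrow> (nat \<times> bool) option" where
  "site_type s t = (if t = 0 then None else Some (Max (set (take t s)), s!(t-1) = Max (set (take t s))))"

definition child_stats :: "nat \<Rightarrow> stat \<Rightarrow> (nat \<times> bool) option \<Rightarrow> stat" where
  "child_stats n st d = (case st of (br, ides, lmx, lmn, iar) \<Rightarrow> (case d of
     None \<Rightarrow> ({Suc n}, insert n ides, {Suc n}, insert (Suc n) lmn, {Suc n})
   | Some (l, b) \<Rightarrow> (if b then insert (Suc n) {x\<in>br. x<l} else insert (Suc n) {x\<in>br. x \<le> l},
        if l < n then insert n ides else ides,
        insert (Suc n) {x\<in>lmx. x \<le> l}, lmn,
        if b \<and> l \<in> iar then insert (Suc n) {x\<in>iar. x \<le> l} else iar)))"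

lemma prefix_max_obtain:
  assumes s: "s \<in> perms n" and t: "1 \<le> t" "t \<le> n"
  obtains p where "p < t" "s!p = Max (set (take t s))" "lrmax_at s p" "\<And>i. i < t \<Longrightarrow> s!i \<le> Max (set (take t s))"
proof -
  note pf = permsD[OF s]
  have ne: "set (take t s) \<noteq> {}" using t pf by auto
  have ub: "\<And>i. i < t \<Longrightarrow> s!i \<le> Max (set (take t s))"
  proof -
    fix i assume i: "i < t"
    have "take t s ! i = s!i" using i by simp
    moreover have "i < length (take t s)" using i t pf by simp
    ultimately have "s!i \<in> set (take t s)" by (metis nth_mem)
    then show "s!i \<le> Max (set (take t s))" by simp
  qed
  have "Max (set (take t s)) \<in> set (take t s)" using ne by simp
  then obtain p where p: "p < t" "s!p = Max (set (take t s))" using t pf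
    by (auto simp: in_set_conv_nth)
  have "lrmax_at s p"
    unfolding lrmax_at_def
  proof (intro conjI allI impI)
    show "p < length s" using p t pf by simp
    fix j assume "j < p"
    hence "s!j \<le> s!p" using ub p by simp
    moreover have "s!j \<noteq> s!p" using perms_nth_inj[OF s, of j p] \<open>j<p\<close> p t pf by auto
    ultimately show "s!j < s!p" by simp
  qed
  then show ?thesis using that p ub by blast
qed

lemma increasing_run_less:
  fixes s :: "nat list"
  assumes h: "\<forall>j. Suc j \<le> m \<longrightarrow> s!j < s!(Suc j)"
  shows "a < b \<Longrightarrow> b \<le> m \<Longrightarrow> s!a < s!b"
proof (induction b)
  case 0 then show ?case by simp
next
  case (Suc b)
  have st: "s!b < s!(Suc b)" using h Suc.prems by blast
  show ?case
  proof (cases "a = b")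
    case True then show ?thesis using st by simp
  next
    case False
    hence "s!a < s!b" using Suc by simp
    then show ?thesis using st by (rule order.strict_trans)
  qed
qed

locale prefix_max_at =
  fixes s n t p l
  assumes s: "s \<in> perms n" and t1: "1 \<le> t" and tn: "t \<le> n"
    and pt: "p < t" and pl: "s!p = l" and lp: "lrmax_at s p" and ub: "\<And>i. i < t \<Longrightarrow> s!i \<le> l"
begin

lemma pn: "p < n" using pt tn by simp

lemma prefix_Lrmax: "{s!i | i. i<t \<and> lrmax_at s i} = {x \<in> Lrmax s. x \<le> l}"
proof (rule set_eqI, rule iffI)
  fix x assume "x \<in> {s!i | i. i<t \<and> lrmax_at s i}"
  then show "x \<in> {x \<in> Lrmax s. x \<le> l}" unfolding Lrmax_eq_lrmax_at using ub by auto
next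
  fix x assume "x \<in> {x \<in> Lrmax s. x \<le> l}"
  then obtain i where i: "x = s!i" "lrmax_at s i" "x \<le> l" unfolding Lrmax_eq_lrmax_at by blast
  have "i < t"
  proof (rule ccontr)
    assume "\<not> i < t"
    hence "p < i" using pt by simp
    hence "s!p < s!i" using lrmax_at_less lp i by blast
    then show False using i pl by simp
  qed
  then show "x \<in> {s!i | i. i<t \<and> lrmax_at s i}" using i by blast
qed

lemma prefix_before_n_iff: "t \<le> pos s n \<longleftrightarrow> l < n"
proof -
  note pf = permsD[OF s]
  have n1: "1 \<le> n" using t1 tn by simp
  note pp = pos_perms[OF s n1 order_refl]
  have ln: "l \<le> n" using pf pn pl by auto
  show ?thesis
  proof
    assume "t \<le> pos s n"
    hence "p \<noteq> pos s n" using pt by simp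
    hence "s!p \<noteq> n" using perms_nth_inj[OF s pn pp(1)] pp(2) by auto
    then show "l < n" using ln pl by simp
  next
    assume "l < n"
    show "t \<le> pos s n"
    proof (rule ccontr)
      assume "\<not> t \<le> pos s n"
      hence "n \<le> l" using ub[of "pos s n"] pp by simp
      then show False using \<open>l < n\<close> by simp
    qed
  qed
qed

lemma last_eq_iff: "s!(t-1) = l \<longleftrightarrow> t - 1 = p"
proof
  assume "s!(t-1) = l"
  then show "t - 1 = p" using perms_nth_inj[OF s, of "t-1" p] pl pt tn pn by simp
qed (use pl in simp)

lemma Br_eq: "Br s = {s!i | i. lrmax_at s i \<and> (Suc i < n \<longrightarrow> s!(Suc i) < s!i)}"
  using Br_pos[OF s] permsD(1)[OF s] by simp

lemma prefix_Br_last: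
  assumes tp: "t - 1 = p"
  shows "{s!i | i. Suc i < t \<and> lrmax_at s i \<and> s!(Suc i) < s!i} = {x\<in>Br s. x < l}"
proof (rule set_eqI, rule iffI)
  fix x assume "x \<in> {s!i | i. Suc i < t \<and> lrmax_at s i \<and> s!(Suc i) < s!i}"
  then obtain i where i: "x = s!i" "Suc i < t" "lrmax_at s i" "s!(Suc i) < s!i" by blast
  then have "x < l" using lrmax_at_less[OF i(3) lp] tp pl by simp
  moreover have "x \<in> Br s" unfolding Br_eq using i by blast
  ultimately show "x \<in> {x\<in>Br s. x < l}" by simp
next
  fix x assume "x \<in> {x\<in>Br s. x < l}"
  then obtain i where i: "x = s!i" "lrmax_at s i" "Suc i < n \<longrightarrow> s!(Suc i) < s!i" "x < l"
    unfolding Br_eq by blast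
  then have "i < p" using lrmax_at_less_rev[OF i(2) lp] pl by simp
  then have "Suc i < t" "Suc i < n" using tp pn by auto
  then show "x \<in> {s!i | i. Suc i < t \<and> lrmax_at s i \<and> s!(Suc i) < s!i}" using i by blast
qed

lemma prefix_Br_not_last:
  assumes tp: "p < t - 1"
  shows "{s!i | i. Suc i < t \<and> lrmax_at s i \<and> s!(Suc i) < s!i} = {x\<in>Br s. x \<le> l}"
proof (rule set_eqI, rule iffI)
  fix x assume "x \<in> {s!i | i. Suc i < t \<and> lrmax_at s i \<and> s!(Suc i) < s!i}"
  then obtain i where i: "x = s!i" "Suc i < t" "lrmax_at s i" "s!(Suc i) < s!i" by blast
  then show "x \<in> {x\<in>Br s. x \<le> l}" unfolding Br_eq using ub by auto
next
  fix x assume "x \<in> {x\<in>Br s. x \<le> l}"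
  then obtain i where i: "x = s!i" "lrmax_at s i" "Suc i < n \<longrightarrow> s!(Suc i) < s!i" "x \<le> l"
    unfolding Br_eq by blast
  then have "i \<le> p" using lrmax_at_less[OF lp i(2)] pl by (metis not_le)
  then have "Suc i < t" "Suc i < n" using tp tn by auto
  then show "x \<in> {s!i | i. Suc i < t \<and> lrmax_at s i \<and> s!(Suc i) < s!i}" using i by blast
qed

lemma prefix_Br: "{s!i | i. Suc i < t \<and> lrmax_at s i \<and> s!(Suc i) < s!i} =
   (if s!(t-1) = l then {x\<in>Br s. x < l} else {x\<in>Br s. x \<le> l})"
  using prefix_Br_last prefix_Br_not_last last_eq_iff pt by auto

lemma ascending_prefix_iff: "(\<forall>j. Suc j < t \<longrightarrow> s!j < s!(Suc j)) \<longleftrightarrow> t - 1 = p \<and> iar_at s p"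
proof
  assume asc: "\<forall>j. Suc j < t \<longrightarrow> s!j < s!(Suc j)"
  have "t - 1 = p"
  proof (rule ccontr)
    assume "t - 1 \<noteq> p"
    then have "s!p < s!(t-1)" using increasing_run_less[of "t-1" s p "t-1"] asc pt by simp
    then show False using ub[of "t-1"] t1 pl by simp
  qed
  then show "t - 1 = p \<and> iar_at s p" using asc pn permsD(1)[OF s] unfolding iar_at_def by auto
qed (use pn permsD(1)[OF s] in \<open>auto simp: iar_at_def\<close>)

lemma l_in_Iar_iff: "l \<in> Iar s \<longleftrightarrow> iar_at s p"
proof
  assume "l \<in> Iar s"
  then obtain i where i: "s!i = l" "iar_at s i" unfolding Iar_eq_iar_at by blast
  then have "i = p" using perms_nth_inj[OF s, of i p] pl pn permsD(1)[OF s] unfolding iar_at_def by auto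
  then show "iar_at s p" using i by simp
qed (use pl in \<open>auto simp: Iar_eq_iar_at\<close>)

lemma set_take_eq_Iar:
  assumes tp: "t - 1 = p" and run: "iar_at s p"
  shows "set (take t s) = {x\<in>Iar s. x \<le> l}"
proof (rule set_eqI, rule iffI)
  fix x assume "x \<in> set (take t s)"
  then obtain i where i: "i < t" "x = s!i" using set_take_nth[of t s] tn permsD(1)[OF s] by auto
  then have "iar_at s i" using run tp pn permsD(1)[OF s] unfolding iar_at_def by auto
  then show "x \<in> {x\<in>Iar s. x \<le> l}" using ub i unfolding Iar_eq_iar_at by auto
next
  fix x assume "x \<in> {x\<in>Iar s. x \<le> l}"
  then obtain i where i: "x = s!i" "iar_at s i" "x \<le> l" unfolding Iar_eq_iar_at by blast
  have "i \<le> p"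
  proof (rule ccontr)
    assume "\<not> i \<le> p"
    then have "s!p < s!i" using increasing_run_less[of i s p i] i(2) unfolding iar_at_def by auto
    then show False using i pl by simp
  qed
  then show "x \<in> set (take t s)" using set_take_nth[of t s] tn tp pt permsD(1)[OF s] i by auto
qed

lemma prefix_Iar: "(if (\<forall>j. Suc j < t \<longrightarrow> s!j < s!(Suc j)) then insert (Suc n) (set (take t s)) else Iar s) =
   (if s!(t-1) = l \<and> l \<in> Iar s then insert (Suc n) {x\<in>Iar s. x \<le> l} else Iar s)"
  using ascending_prefix_iff last_eq_iff l_in_Iar_iff set_take_eq_Iar by auto

end

lemma stats_insert_at:
  assumes s: "s \<in> perms n" and n: "1 \<le> n" and t: "t \<le> n"
  shows "stats (insert_at (Suc n) s t) = child_stats n (stats s) (site_type s t)"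
proof -
  interpret insertion s n t using s t by unfold_locales
  note insert_stats = Br_insert_at Ides_insert_at[OF n] Lrmax_insert_at Lrmin_insert_at Iar_insert_at
  show ?thesis
  proof (cases "t = 0")
    case True
    then show ?thesis unfolding stats_def child_stats_def site_type_def using insert_stats by simp
  next
    case False
    then have t1: "1 \<le> t" by simp
    obtain p where p: "p < t" "s!p = Max (set (take t s))" "lrmax_at s p"
      "\<And>i. i < t \<Longrightarrow> s!i \<le> Max (set (take t s))"
      using prefix_max_obtain[OF s t1 t] by blast
    interpret prefix_max_at s n t p "Max (set (take t s))"
      using s t1 t p by unfold_locales auto
    show ?thesis unfolding stats_def child_stats_def site_type_def
      using False insert_stats prefix_Lrmax prefix_before_n_iff prefix_Br prefix_Iar by simp
  qed
qed

text \<open>The site type (n, False) is realised exactly under the following condition on the statistics.\<close>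

definition top_site_cond :: "nat \<Rightarrow> stat \<Rightarrow> bool" where
  "top_site_cond n st = (case st of (br, ides, lmx, lmn, iar) \<Rightarrow>
     ides \<noteq> {} \<and> (\<forall>v. Max ides < v \<and> v \<le> n \<longrightarrow> v \<in> lmx) \<and> (\<forall>v. Max ides < v \<and> v < n \<longrightarrow> v \<notin> br))"

definition site_types :: "nat \<Rightarrow> stat \<Rightarrow> (nat \<times> bool) option set" where
  "site_types n st = (case st of (br, ides, lmx, lmn, iar) \<Rightarrow>
     insert None ((\<lambda>l. Some (l, True)) ` lmx \<union> (\<lambda>l. Some (l, False)) ` (br - {n})
       \<union> (if top_site_cond n st then {Some (n, False)} else {})))"

lemma top_site_cond_stats: "top_site_cond n (stats s) \<longleftrightarrow> Ides s \<noteq> {} \<and> (\<forall>v. Max (Ides s) < v \<and> v \<le> n \<longrightarrow> v \<in> Lrmax s)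
   \<and> (\<forall>v. Max (Ides s) < v \<and> v < n \<longrightarrow> v \<notin> Br s)"
  unfolding top_site_cond_def stats_def by simp

lemma site_types_stats: "site_types n (stats s) = insert None ((\<lambda>l. Some (l, True)) ` Lrmax s \<union> (\<lambda>l. Some (l, False)) ` (Br s - {n})
       \<union> (if top_site_cond n (stats s) then {Some (n, False)} else {}))"
  unfolding site_types_def by (simp add: stats_def)

text \<open>A witness for the condition: position k0 holds the largest letter to the right of n, and the
  letters exceeding it, all of which lie to the left of n, appear in increasing order.\<close>

locale top_site_witness =
  fixes s :: "nat list" and n k0 :: nat
  assumes s: "s \<in> perms n" and n1: "1 \<le> n"
    and k0: "pos s n < k0" "k0 < n"
    and k0_max: "\<And>k. pos s n < k \<Longrightarrow> k < n \<Longrightarrow> s!k \<le> s!k0"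
    and increasing: "\<And>i j. i < j \<Longrightarrow> j < pos s n \<Longrightarrow> s!k0 < s!i \<Longrightarrow> s!i < s!j"
begin

lemma k0_letter: "1 \<le> s!k0" "s!k0 < n" "pos s (s!k0) = k0"
proof -
  note pf = permsD[OF s] and pn = pos_perms[OF s n1 order_refl]
  show "1 \<le> s!k0" "pos s (s!k0) = k0" using pf k0 pos_nth[of s k0] by auto
  have "s!k0 \<noteq> n" using perms_nth_inj[OF s, of k0 "pos s n"] pn k0 by auto
  then show "s!k0 < n" using pf k0 by (simp add: le_neq_implies_less)
qed

lemma pos_above_less: "s!k0 < v \<Longrightarrow> v < n \<Longrightarrow> pos s v < pos s n"
proof -
  assume v: "s!k0 < v" "v < n"
  note pv = pos_perms[OF s _ less_imp_le[OF v(2)]]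
  have "1 \<le> v" using v k0_letter by simp
  have "\<not> pos s n < pos s v"
  proof
    assume "pos s n < pos s v"
    then have "v \<le> s!k0" using k0_max[of "pos s v"] pv \<open>1 \<le> v\<close> by simp
    then show False using v by simp
  qed
  moreover have "pos s v \<noteq> pos s n" using pv pos_perms[OF s n1 order_refl] \<open>1 \<le> v\<close> v by auto
  ultimately show ?thesis by simp
qed

lemma k0_letter_Ides: "s!k0 \<in> Ides s"
proof -
  have "pos s (Suc (s!k0)) < pos s (s!k0)"
    using pos_above_less[of "Suc (s!k0)"] k0_letter k0 by (cases "Suc (s!k0) = n") auto
  then show ?thesis unfolding Ides_def using k0_letter permsD(1)[OF s] by auto
qed

lemma Ides_le_k0_letter: "i \<in> Ides s \<Longrightarrow> i \<le> s!k0"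
proof (rule ccontr)
  assume "i \<in> Ides s" "\<not> i \<le> s!k0"
  then have i1: "1 \<le> i" "i < n" "pos s (Suc i) < pos s i" using Ides_sub[OF s] unfolding Ides_def by auto
  then have pi: "pos s i < pos s n" using pos_above_less \<open>\<not> i \<le> s!k0\<close> by simp
  then have "Suc i \<noteq> n" using i1 by auto
  then have "s!(pos s (Suc i)) < s!(pos s i)"
    using increasing[of "pos s (Suc i)" "pos s i"] i1 pi pos_perms[OF s, of "Suc i"] \<open>\<not> i \<le> s!k0\<close> by simp
  then show False using pos_perms[OF s, of i] pos_perms[OF s, of "Suc i"] i1 \<open>Suc i \<noteq> n\<close> by simp
qed

lemma above_Lrmax:
  assumes v: "s!k0 < v" "v \<le> n"
  shows "v \<in> Lrmax s"
proof -
  have "1 \<le> v" using v k0_letter by simp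
  note pv = pos_perms[OF s this v(2)]
  have "s!j < s!(pos s v)" if j: "j < pos s v" for j
  proof (rule ccontr)
    assume nl: "\<not> s!j < s!(pos s v)"
    have "j < n" using j pv by simp
    have "s!j \<noteq> v" using perms_nth_inj[OF s \<open>j < n\<close> pv(1)] pv(2) j by auto
    with nl pv(2) have gt: "v < s!j" by simp
    then have "v < n" using permsD(4)[OF s \<open>j < n\<close>] by simp
    then have "pos s v < pos s n" using pos_above_less v(1) by simp
    then have "s!j < s!(pos s v)" using increasing[OF j] v(1) gt by simp
    with nl show False by simp
  qed
  then have "lrmax_at s (pos s v)" unfolding lrmax_at_def using pv permsD(1)[OF s] by simp
  then show ?thesis using lrmax_at_in_Lrmax pv(2) by force
qed

lemma above_not_Br: "s!k0 < v \<Longrightarrow> v < n \<Longrightarrow> v \<notin> Br s"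
proof
  assume v: "s!k0 < v" "v < n" "v \<in> Br s"
  note pn = pos_perms[OF s n1 order_refl]
  obtain i where i: "v = s!i" "lrmax_at s i" "Suc i < length s \<longrightarrow> s!(Suc i) < s!i"
    using v(3) unfolding Br_pos[OF s] by blast
  have "i = pos s v" using pos_nth[of s i] permsD(1,2)[OF s] i unfolding lrmax_at_def by simp
  then have iq: "i < pos s n" using pos_above_less v by simp
  then have "Suc i < length s" using pn permsD(1)[OF s] by simp
  moreover have "v < s!(Suc i)"
    using increasing[of i "Suc i"] iq i v pn by (cases "Suc i = pos s n") auto
  ultimately show False using i by simp
qed

lemma top_site_cond: "top_site_cond n (stats s)"
proof -
  have "Max (Ides s) = s!k0" using Max_eqI[OF Ides_finite] k0_letter_Ides Ides_le_k0_letter by blast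
  then show ?thesis unfolding top_site_cond_stats using k0_letter_Ides above_Lrmax above_not_Br by auto
qed

end

lemma top_site_condI:
  assumes s: "s \<in> perms n" and n1: "1 \<le> n" and not_last: "Suc (pos s n) < n"
    and increasing: "\<And>i j. i < j \<Longrightarrow> j < pos s n \<Longrightarrow> (\<And>k. pos s n < k \<Longrightarrow> k < n \<Longrightarrow> s!k < s!i) \<Longrightarrow> s!i < s!j"
  shows "top_site_cond n (stats s)"
proof -
  obtain k0 where k0: "pos s n < k0 \<and> k0 < n" "\<forall>k. pos s n < k \<and> k < n \<longrightarrow> s!k \<le> s!k0"
  proof -
    have "s!k < Suc n" if "k < n" for k using permsD(4)[OF s that] by simp
    then show ?thesis
      using that ex_has_greatest_nat[of "\<lambda>k. pos s n < k \<and> k < n" "Suc (pos s n)" "\<lambda>k. s!k" "Suc n"]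
        not_last by blast
  qed
  have "top_site_witness s n k0"
  proof
    fix i j assume "i < j" "j < pos s n" "s!k0 < s!i"
    then show "s!i < s!j" using increasing k0(2) le_less_trans by blast
  qed (use s n1 k0 in auto)
  then show ?thesis by (rule top_site_witness.top_site_cond)
qed

text \<open>Conversely, under the condition the letters above m = Max (Ides s) form the factor
  m + 1, m + 2, \<dots>, n of s, and n precedes m.\<close>

locale top_site =
  fixes s n
  assumes s: "s \<in> perms n" and n1: "1 \<le> n" and tc: "top_site_cond n (stats s)"
begin

definition m where "m = Max (Ides s)"

lemma m_props: "m \<in> Ides s" "1 \<le> m" "m < n"
  "\<And>v. m < v \<Longrightarrow> v \<le> n \<Longrightarrow> v \<in> Lrmax s" "\<And>v. m < v \<Longrightarrow> v < n \<Longrightarrow> v \<notin> Br s"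
proof -
  have ne: "Ides s \<noteq> {}" using tc unfolding top_site_cond_stats by simp
  show mi: "m \<in> Ides s" unfolding m_def using ne Ides_finite by simp
  show "1 \<le> m" "m < n" using Ides_sub[OF s mi] by auto
  show "\<And>v. m < v \<Longrightarrow> v \<le> n \<Longrightarrow> v \<in> Lrmax s" "\<And>v. m < v \<Longrightarrow> v < n \<Longrightarrow> v \<notin> Br s"
    using tc unfolding top_site_cond_stats m_def by auto
qed

lemma run_step: "m < v \<Longrightarrow> v < n \<Longrightarrow> Suc (pos s v) < n \<and> s!(Suc (pos s v)) = Suc v"
proof -
  assume v: "m < v" "v < n"
  note pf = permsD[OF s]
  have vL: "v \<in> Lrmax s" using m_props v by simp
  note lv = lrmax_at_pos[OF s vL]
  define i where "i = pos s v"
  have nb: "v \<notin> Br s" using m_props v by simp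
  have "(Suc i < length s \<longrightarrow> s!(Suc i) < s!i) \<Longrightarrow> v \<in> Br s"
    unfolding Br_pos[OF s] by (rule CollectI, rule exI[of _ i]) (use lv i_def in auto)
  hence "\<not> (Suc i < length s \<longrightarrow> s!(Suc i) < s!i)" using nb by blast
  hence si: "Suc i < n" "\<not> s!(Suc i) < v" using lv i_def pf by auto
  have "s!(Suc i) \<noteq> v" using perms_nth_inj[OF s, of "Suc i" i] si lv i_def by auto
  hence rv: "v < s!(Suc i)" using si by simp
  have lr: "lrmax_at s (Suc i)" unfolding lrmax_at_def
  proof (intro conjI allI impI)
    show "Suc i < length s" using si pf by simp
    fix j assume "j < Suc i"
    then consider "j < i" | "j = i" by linarith
    then show "s!j < s!(Suc i)"
    proof cases
      case 1 then show ?thesis using lv i_def rv unfolding lrmax_at_def by (metis order.strict_trans)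
    next
      case 2 then show ?thesis using lv i_def rv by simp
    qed
  qed
  have sL: "Suc v \<in> Lrmax s" using m_props v by simp
  note lsv = lrmax_at_pos[OF s sL]
  have "s!(Suc i) = Suc v"
  proof (rule ccontr)
    assume "s!(Suc i) \<noteq> Suc v"
    hence "Suc v < s!(Suc i)" using rv by simp
    hence "pos s (Suc v) < Suc i" using lrmax_at_less_rev[OF lsv[THEN conjunct1] lr] lsv by simp
    moreover have "i < pos s (Suc v)" using lrmax_at_less_rev[OF lv[THEN conjunct1] lsv[THEN conjunct1]] lv lsv i_def by simp
    ultimately show False by simp
  qed
  then show ?thesis using si i_def by simp
qed

lemma run_nth: "m < v \<Longrightarrow> v + d \<le> n \<Longrightarrow> pos s v + d < n \<and> s!(pos s v + d) = v + d"
proof (induction d)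
  case 0
  then show ?case using pos_perms[OF s, of v] m_props by simp
next
  case (Suc d)
  hence ih: "pos s v + d < n" "s!(pos s v + d) = v + d" by auto
  have "m < v + d" "v + d < n" using Suc.prems by auto
  hence st: "Suc (pos s (v+d)) < n \<and> s!(Suc (pos s (v+d))) = Suc (v + d)" using run_step by blast
  have "pos s (v+d) = pos s v + d" using pos_nth[of s "pos s v + d"] ih permsD[OF s] by simp
  then show ?case using st by simp
qed

lemma pos_run: "m < v \<Longrightarrow> v \<le> n \<Longrightarrow> pos s n = pos s v + (n - v)"
proof -
  assume v: "m < v" "v \<le> n"
  have "pos s v + (n - v) < n \<and> s!(pos s v + (n-v)) = n" using run_nth[of v "n - v"] v by simp
  thus ?thesis using pos_nth[of s "pos s v + (n - v)"] permsD[OF s] by simp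
qed

lemma run_val: "m < v \<Longrightarrow> v \<le> n \<Longrightarrow> pos s v \<le> j \<Longrightarrow> j \<le> pos s n \<Longrightarrow> v \<le> s!j"
proof -
  assume v: "m < v" "v \<le> n" "pos s v \<le> j" "j \<le> pos s n"
  define d where "d = j - pos s v"
  have "v + d \<le> n" using pos_run[OF v(1,2)] v d_def by simp
  hence "s!(pos s v + d) = v + d" using run_nth[OF v(1)] by blast
  thus ?thesis using d_def v by simp
qed

lemma pos_n_less_pos_m: "pos s n < pos s m"
proof (rule ccontr)
  assume "\<not> pos s n < pos s m"
  hence le: "pos s m \<le> pos s n" by simp
  have mi: "m \<in> Ides s" using m_props by simp
  hence lt: "pos s (Suc m) < pos s m" unfolding Ides_def by simp
  have "Suc m \<le> s!(pos s m)" using run_val[of "Suc m" "pos s m"] lt le m_props by simp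
  moreover have "s!(pos s m) = m" using pos_perms[OF s, of m] m_props by simp
  ultimately show False by simp
qed

lemma Suc_pos_n_less: "Suc (pos s n) < n"
proof -
  have "pos s m < n" using pos_perms[OF s, of m] m_props by simp
  moreover have "pos s m \<noteq> Suc (pos s n) \<or> Suc (pos s n) < n" using pos_n_less_pos_m calculation by simp
  ultimately show ?thesis using pos_n_less_pos_m by linarith
qed

end

lemma site_type_eq:
  assumes s: "s \<in> perms n" and pt: "p < t" and tn: "t \<le> n" and ub: "\<And>i. i < t \<Longrightarrow> s!i \<le> s!p"
  shows "site_type s t = Some (s!p, s!(t-1) = s!p)"
proof -
  note pf = permsD[OF s]
  have st: "set (take t s) = (\<lambda>i. s!i) ` {i. i < t}" using set_take_nth[of t s] tn pf by simp
  have "Max (set (take t s)) = s!p"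
    unfolding st by (rule Max_eqI) (use pt ub in auto)
  thus ?thesis unfolding site_type_def using pt by simp
qed

lemma site_type_lrmax: "s \<in> perms n \<Longrightarrow> lrmax_at s p \<Longrightarrow> site_type s (Suc p) = Some (s!p, True)"
proof -
  assume s: "s \<in> perms n" and l: "lrmax_at s p"
  have "p < n" using l permsD[OF s] unfolding lrmax_at_def by simp
  moreover have "\<And>i. i < Suc p \<Longrightarrow> s!i \<le> s!p" using l unfolding lrmax_at_def by (metis less_Suc_eq nless_le order.strict_implies_order order_refl)
  ultimately show ?thesis using site_type_eq[OF s, of p "Suc p"] by simp
qed

lemma site_type_memD:
  assumes s: "s \<in> perms n" and t: "1 \<le> t" "t \<le> n" and d: "site_type s t = Some (l, b)"
  shows "b \<Longrightarrow> l \<in> Lrmax s" "\<not> b \<Longrightarrow> l \<in> Br s"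
proof -
  obtain p where p: "p < t" "s!p = Max (set (take t s))" "lrmax_at s p" "\<And>i. i < t \<Longrightarrow> s!i \<le> Max (set (take t s))"
    using prefix_max_obtain[OF s t] by blast
  have l: "l = s!p" "b = (s!(t-1) = s!p)" using d p t unfolding site_type_def by auto
  show "b \<Longrightarrow> l \<in> Lrmax s" using l(1) lrmax_at_in_Lrmax[OF p(3)] by simp
  assume nb: "\<not> b"
  hence "t - 1 \<noteq> p" using l by auto
  hence sp: "Suc p < t" using p by simp
  hence "s!(Suc p) \<le> s!p" using p by simp
  moreover have "s!(Suc p) \<noteq> s!p" using perms_nth_inj[OF s, of "Suc p" p] sp t by auto
  ultimately have lt: "s!(Suc p) < s!p" by simp
  show "l \<in> Br s" unfolding Br_pos[OF s]
    apply (rule CollectI, rule exI[of _ p]) using lt l p by auto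
qed

lemma site_type_Some:
  assumes s: "s \<in> perms n" and t: "1 \<le> t" "t \<le> n"
  shows "\<exists>l b. site_type s t = Some (l, b)"
  using t unfolding site_type_def by auto

lemma site_type_None_iff: "site_type s t = None \<longleftrightarrow> t = 0"
  unfolding site_type_def by auto

lemma site_type_True_inj:
  assumes s: "s \<in> perms n" and t: "1 \<le> t" "t \<le> n" "1 \<le> t'" "t' \<le> n"
    and d: "site_type s t = Some (l, True)" "site_type s t' = Some (l, True)"
  shows "t = t'"
proof -
  have "s!(t-1) = l" "s!(t'-1) = l" using d t unfolding site_type_def by (auto split: if_splits)
  hence "t - 1 = t' - 1" using perms_nth_inj[OF s, of "t-1" "t'-1"] t by simp
  thus ?thesis using t by simp
qed

lemma lrmax_at_le_pos_n:
  assumes s: "s \<in> perms n" and n1: "1 \<le> n" and l: "lrmax_at s p"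
  shows "p \<le> pos s n" "s!p < n \<Longrightarrow> p < pos s n"
proof -
  note pp = pos_perms[OF s n1 order_refl]
  have ln: "lrmax_at s (pos s n)" unfolding lrmax_at_def
  proof (intro conjI allI impI)
    show "pos s n < length s" using pp permsD[OF s] by simp
    fix j assume "j < pos s n"
    hence "s!j \<le> n" "s!j \<noteq> n" using permsD[OF s] pp perms_nth_inj[OF s, of j "pos s n"] by auto
    thus "s!j < s!(pos s n)" using pp by simp
  qed
  have pn: "p < n" using l permsD[OF s] unfolding lrmax_at_def by simp
  show "s!p < n \<Longrightarrow> p < pos s n" using lrmax_at_less_rev[OF l ln] pp by simp
  show "p \<le> pos s n"
  proof (cases "s!p < n")
    case True then show ?thesis using lrmax_at_less_rev[OF l ln] pp by simp
  next
    case False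
    hence "s!p = n" using permsD[OF s] pn by (metis le_neq_implies_less)
    hence "p = pos s n" using perms_nth_inj[OF s pn pp(1)] pp by simp
    thus ?thesis by simp
  qed
qed

lemma site_type_in_site_types:
  assumes s: "s \<in> perms n" and t: "t \<le> n"
    and top: "site_type s t = Some (n, False) \<Longrightarrow> top_site_cond n (stats s)"
  shows "site_type s t \<in> site_types n (stats s)"
proof (cases "t = 0")
  case True
  then show ?thesis unfolding site_types_stats site_type_def by simp
next
  case False
  then obtain l b where lb: "site_type s t = Some (l, b)"
    using site_type_Some[OF s, of t] t by auto
  have "1 \<le> t" using False by simp
  show ?thesis
  proof (cases b)
    case True
    then show ?thesis using site_type_memD[OF s \<open>1 \<le> t\<close> t lb] lb unfolding site_types_stats by simp
  next
    case False
    then show ?thesis using site_type_memD[OF s \<open>1 \<le> t\<close> t lb] lb top unfolding site_types_stats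
      by (cases "l = n") auto
  qed
qed

lemma site_types_cases:
  assumes "d \<in> site_types n (stats s)"
  obtains "d = None"
    | l where "d = Some (l, True)" "l \<in> Lrmax s"
    | l where "d = Some (l, False)" "l \<in> Br s" "l \<noteq> n"
    | "d = Some (n, False)" "top_site_cond n (stats s)"
  using assms unfolding site_types_stats by (auto split: if_splits)

lemma Br_less_n_obtain:
  assumes s: "s \<in> perms n" and n1: "1 \<le> n" and l: "l \<in> Br s" "l \<noteq> n"
  obtains i where "l = s!i" "lrmax_at s i" "i < pos s n" "Suc i < n" "s!(Suc i) < s!i"
proof -
  note pf = permsD[OF s]
  obtain i where i: "l = s!i" "lrmax_at s i" "Suc i < length s \<longrightarrow> s!(Suc i) < s!i"
    using l(1) unfolding Br_pos[OF s] by blast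
  have "s!i < n" using i l pf unfolding lrmax_at_def by (metis le_neq_implies_less)
  then have "i < pos s n" using lrmax_at_le_pos_n[OF s n1 i(2)] by simp
  moreover have "Suc i < n" using calculation pos_perms[OF s n1 order_refl] by simp
  ultimately show ?thesis using that i pf by simp
qed

section \<open>Active sites of the two classes\<close>

locale A_parent =
  fixes s n
  assumes s: "s \<in> perms n" and n1: "1 \<le> n" and A: "avoids_A s"
begin

lemma pn: "pos s n < n" "s!(pos s n) = n" using pos_perms[OF s n1 order_refl] by auto

lemma active_A_upto_pos_n: "t \<le> Suc (pos s n) \<Longrightarrow> active_A s t"
  unfolding active_A_def
proof
  assume t: "t \<le> Suc (pos s n)" and "\<exists>i j k. i<j \<and> j<k \<and> k<t \<and> s!j<s!i \<and> s!k<s!i"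
  then obtain i j k where h: "i<j" "j<k" "k<t" "s!j<s!i" "s!k<s!i" by blast
  note pf = permsD[OF s]
  have kn: "k \<le> pos s n" using h t by simp
  have "s!i \<le> n" using pf h kn pn by simp
  hence "k \<noteq> pos s n" using h pn by auto
  hence kl: "k < pos s n" using kn by simp
  have "s!i \<noteq> n" using perms_nth_inj[OF s, of i "pos s n"] pn h kl by auto
  hence "s!i < s!(pos s n)" using \<open>s!i \<le> n\<close> pn by simp
  then show False using A h kl pn pf unfolding avoids_A_def by blast
qed

lemma descent_site_A:
  assumes t: "1 \<le> t" "t \<le> n" and ok: "active_A s t" and d: "site_type s t = Some (l, False)"
  shows "2 \<le> t \<and> s!(t-2) = l"
proof -
  obtain p where p: "p < t" "s!p = Max (set (take t s))" "lrmax_at s p" "\<And>i. i < t \<Longrightarrow> s!i \<le> Max (set (take t s))"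
    using prefix_max_obtain[OF s t] by blast
  have l: "l = s!p" "s!(t-1) \<noteq> s!p" using d p t unfolding site_type_def by auto
  hence "t - 1 \<noteq> p" by auto
  hence pt: "p < t - 1" using p by simp
  have "p = t - 2"
  proof (rule ccontr)
    assume "p \<noteq> t - 2"
    hence pt2: "p < t - 2" using pt by simp
    have a: "s!(t-2) \<le> s!p" "s!(t-1) \<le> s!p" using p pt2 t by auto
    have "t - 2 < n" "p < n" using pt2 t by auto
    hence b: "s!(t-2) \<noteq> s!p" using perms_nth_inj[OF s, of "t-2" p] pt2 by auto
    have "s!(t-2) < s!p" "s!(t-1) < s!p" using a b l by auto
    moreover have "p < t - 2" "t - 2 < t - 1" "t - 1 < t" using pt2 t by auto
    ultimately show False using ok unfolding active_A_def by blast
  qed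
  thus ?thesis using pt l by simp
qed

lemma top_site_no_descent_above:
  assumes tc: "top_site_cond n (stats s)"
    and h: "i < j" "j < pos s n" "s!j < s!i" "s!(Suc (pos s n)) < s!i"
  shows False
proof -
  interpret T: top_site s n using s n1 tc by unfold_locales
  note pf = permsD[OF s]
  have "s!i \<le> n" "pos s (s!i) = i" using pf pos_nth[of s i] h pn by auto
  show False
  proof (cases "T.m < s!i")
    case True
    then have "s!i \<le> s!j" using T.run_val[OF True \<open>s!i \<le> n\<close>, of j] \<open>pos s (s!i) = i\<close> h by simp
    then show False using h by simp
  next
    case False
    have pm: "pos s T.m < n" "s!(pos s T.m) = T.m" using pos_perms[OF s, of T.m] T.m_props by auto
    have "pos s T.m \<noteq> i" using T.pos_n_less_pos_m h by simp
    then have "s!i \<noteq> T.m" using pm \<open>pos s (s!i) = i\<close> by auto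
    then have im: "s!i < T.m" using False by simp
    then have "pos s T.m \<noteq> Suc (pos s n)" using pm h by auto
    then have "Suc (pos s n) < pos s T.m" using T.pos_n_less_pos_m by simp
    moreover have "j < Suc (pos s n)" "pos s T.m < length s" using h pm pf by auto
    moreover have "s!i < s!(pos s T.m)" using im pm by simp
    ultimately show False using A h unfolding avoids_A_def by blast
  qed
qed

lemma active_A_top_site:
  assumes tc: "top_site_cond n (stats s)"
  shows "active_A s (Suc (Suc (pos s n)))"
  unfolding active_A_def
proof
  assume "\<exists>i j k. i<j \<and> j<k \<and> k<Suc (Suc (pos s n)) \<and> s!j<s!i \<and> s!k<s!i"
  then obtain i j k where h: "i<j" "j<k" "k<Suc (Suc (pos s n))" "s!j<s!i" "s!k<s!i" by blast
  have "k < n" using top_site.Suc_pos_n_less[OF top_site.intro[OF s n1 tc]] h by simp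
  then have "s!i \<le> n" using permsD(4)[OF s] h by simp
  then have "k \<noteq> pos s n" "j \<noteq> pos s n" using h pn by auto
  then consider "k < pos s n" | "k = Suc (pos s n)" "j < pos s n" using h by linarith
  then show False
  proof cases
    case 1
    then have "s!i \<noteq> n" using perms_nth_inj[OF s, of i "pos s n"] pn h by auto
    then have "s!i < s!(pos s n)" using \<open>s!i \<le> n\<close> pn by simp
    then show False using A h 1 pn permsD(1)[OF s] unfolding avoids_A_def by blast
  next
    case 2
    then show False using top_site_no_descent_above[OF tc, of i j] h by simp
  qed
qed

lemma top_site_A:
  assumes t: "1 \<le> t" "t \<le> n" and ok: "active_A s t" and d: "site_type s t = Some (n, False)"
  shows "top_site_cond n (stats s)"
proof -
  note pf = permsD[OF s]
  have a3: "2 \<le> t" "s!(t-2) = n" using descent_site_A[OF t ok d] by auto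
  hence "t - 2 = pos s n" using perms_nth_inj[OF s, of "t-2" "pos s n"] pn t by simp
  hence tq: "t = Suc (Suc (pos s n))" using a3 by simp
  hence qlt: "Suc (pos s n) < n" using t by simp
  show ?thesis
  proof (rule top_site_condI[OF s n1 qlt])
    fix i j assume h: "i < j" "j < pos s n" and above: "\<And>k. pos s n < k \<Longrightarrow> k < n \<Longrightarrow> s!k < s!i"
    show "s!i < s!j"
    proof (rule ccontr)
      assume "\<not> s!i < s!j"
      moreover have "s!i \<noteq> s!j" using perms_nth_inj[OF s, of i j] h pn by auto
      ultimately have "s!j < s!i" by simp
      moreover have "j < Suc (pos s n)" "Suc (pos s n) < t" using h tq by auto
      ultimately show False using ok h above[of "Suc (pos s n)"] qlt unfolding active_A_def by blast
    qed
  qed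
qed

lemma site_type_inj_A: "inj_on (site_type s) {t. t \<le> n \<and> active_A s t}"
proof (rule inj_onI)
  fix t t' assume t: "t \<in> {t. t \<le> n \<and> active_A s t}" and t': "t' \<in> {t. t \<le> n \<and> active_A s t}"
    and eq: "site_type s t = site_type s t'"
  show "t = t'"
  proof (cases "t = 0 \<or> t' = 0")
    case True
    then show ?thesis using eq site_type_None_iff by metis
  next
    case False
    then obtain l b where lb: "site_type s t = Some (l, b)"
      using site_type_Some[OF s, of t] t by auto
    show ?thesis
    proof (cases b)
      case True
      then show ?thesis using site_type_True_inj[OF s, of t t' l] lb eq t t' False by simp
    next
      case False
      then have "2 \<le> t \<and> s!(t-2) = l" "2 \<le> t' \<and> s!(t'-2) = l"
        using descent_site_A lb eq t t' \<open>\<not> (t = 0 \<or> t' = 0)\<close> by auto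
      moreover have "t - 2 < n" "t' - 2 < n" using calculation t t' by auto
      ultimately have "t - 2 = t' - 2" using perms_nth_inj[OF s, of "t-2" "t'-2"] by simp
      then show ?thesis using \<open>2 \<le> t \<and> _\<close> \<open>2 \<le> t' \<and> _\<close> by linarith
    qed
  qed
qed

lemma site_types_subset_A: "site_types n (stats s) \<subseteq> site_type s ` {t. t \<le> n \<and> active_A s t}"
proof
  note pf = permsD[OF s]
  fix d assume d: "d \<in> site_types n (stats s)"
  obtain t where "t \<le> n" "active_A s t" "site_type s t = d"
    using d
  proof (cases rule: site_types_cases)
    case 1
    then show ?thesis using that[of 0] by (simp add: active_A_def site_type_None_iff)
  next
    case (2 l)
    note lp = lrmax_at_pos[OF s 2(2)]
    have "pos s l \<le> pos s n" using lrmax_at_le_pos_n[OF s n1] lp by simp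
    then have "active_A s (Suc (pos s l))" using active_A_upto_pos_n by simp
    moreover have "Suc (pos s l) \<le> n" using lp pf unfolding lrmax_at_def by simp
    moreover have "site_type s (Suc (pos s l)) = d" using site_type_lrmax[OF s] lp 2 by simp
    ultimately show ?thesis using that by blast
  next
    case (3 l)
    then obtain i where i: "l = s!i" "lrmax_at s i" "i < pos s n" "Suc i < n" "s!(Suc i) < s!i"
      using Br_less_n_obtain[OF s n1] by blast
    have "s!k \<le> s!i" if "k < Suc (Suc i)" for k
      using that i(2,5) unfolding lrmax_at_def by (auto simp: less_Suc_eq)
    then have "site_type s (Suc (Suc i)) = Some (s!i, False)"
      using site_type_eq[OF s, of i "Suc (Suc i)"] i by simp
    then show ?thesis using that[of "Suc (Suc i)"] active_A_upto_pos_n i 3 by simp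
  next
    case 4
    interpret T: top_site s n using s n1 4(2) by unfold_locales
    have tn: "Suc (Suc (pos s n)) \<le> n" using T.Suc_pos_n_less by simp
    have "s!(Suc (pos s n)) \<noteq> s!(pos s n)"
      using perms_nth_inj[OF s, of "Suc (pos s n)" "pos s n"] tn pn by fastforce
    then have "site_type s (Suc (Suc (pos s n))) = d"
      using site_type_eq[OF s, of "pos s n" "Suc (Suc (pos s n))"] pf pn tn 4 by simp
    then show ?thesis using that active_A_top_site 4 tn by blast
  qed
  then show "d \<in> site_type s ` {t. t \<le> n \<and> active_A s t}" by blast
qed

lemma site_type_bij_A: "bij_betw (site_type s) {t. t \<le> n \<and> active_A s t} (site_types n (stats s))"
proof -
  have "site_type s ` {t. t \<le> n \<and> active_A s t} \<subseteq> site_types n (stats s)"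
  proof
    fix d assume "d \<in> site_type s ` {t. t \<le> n \<and> active_A s t}"
    then obtain t where t: "t \<le> n" "active_A s t" "d = site_type s t" by blast
    have "top_site_cond n (stats s)" if "site_type s t = Some (n, False)"
      using top_site_A[of t] t that site_type_None_iff[of s t] by (cases "t = 0") auto
    then show "d \<in> site_types n (stats s)" using site_type_in_site_types[OF s t(1)] t by blast
  qed
  then show ?thesis
    unfolding bij_betw_def using site_type_inj_A site_types_subset_A by blast
qed

end

locale B_parent =
  fixes s n
  assumes s: "s \<in> perms n" and n1: "1 \<le> n" and B: "avoids_B s"
begin

lemma pn: "pos s n < n" "s!(pos s n) = n" using pos_perms[OF s n1 order_refl] by auto

lemma active_B_lrmax: "lrmax_at s p \<Longrightarrow> active_B s n (Suc p)"
  unfolding active_B_def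
proof
  assume lp: "lrmax_at s p" and "\<exists>i j l. i<j \<and> j<Suc p \<and> Suc p\<le>l \<and> l<n \<and> s!j<s!i \<and> s!l<s!i"
  then obtain i j l where h: "i<j" "j<Suc p" "Suc p\<le>l" "l<n" "s!j<s!i" "s!l<s!i" by blast
  note pf = permsD[OF s]
  have ip: "s!i < s!p" using lp h unfolding lrmax_at_def by simp
  hence "j \<noteq> p" using h by auto
  hence "j < p" using h by simp
  moreover have "p < l" "l < length s" using h pf by auto
  ultimately show False using B h ip unfolding avoids_B_def by blast
qed

lemma descent_site_B:
  assumes t: "1 \<le> t" "t < n" and ok: "active_B s n t" and d: "site_type s t = Some (l, False)"
  shows "l < s!t"
proof -
  note pf = permsD[OF s]
  obtain p where p: "p < t" "s!p = Max (set (take t s))" "lrmax_at s p" "\<And>i. i < t \<Longrightarrow> s!i \<le> Max (set (take t s))"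
    using prefix_max_obtain[OF s t(1) less_imp_le[OF t(2)]] by blast
  have l: "l = s!p" "s!(t-1) \<noteq> s!p" using d p t unfolding site_type_def by auto
  hence "t - 1 \<noteq> p" by auto
  hence pt: "p < t - 1" using p by simp
  have "s!t \<noteq> s!p" using perms_nth_inj[OF s, of t p] p t by auto
  moreover have "\<not> s!t < s!p"
  proof
    assume "s!t < s!p"
    moreover have "s!(t-1) < s!p" using p(4)[of "t-1"] l t p(2) by (simp add: order_le_neq_trans)
    moreover have "p < t - 1" "t - 1 < t" "t \<le> t" "t < n" using pt t by auto
    ultimately show False using ok unfolding active_B_def by blast
  qed
  ultimately show ?thesis using l by simp
qed

lemma top_site_B:
  assumes t: "1 \<le> t" "t \<le> n" and ok: "active_B s n t" and d: "site_type s t = Some (n, False)"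
  shows "top_site_cond n (stats s)"
proof -
  note pf = permsD[OF s]
  obtain p where p: "p < t" "s!p = Max (set (take t s))" "lrmax_at s p" "\<And>i. i < t \<Longrightarrow> s!i \<le> Max (set (take t s))"
    using prefix_max_obtain[OF s t] by blast
  have l: "n = s!p" "s!(t-1) \<noteq> s!p" using d p t unfolding site_type_def by auto
  hence "t - 1 \<noteq> p" by auto
  hence pt: "p < t - 1" using p by simp
  have "p = pos s n" using perms_nth_inj[OF s, of p "pos s n"] pn l p t by simp
  hence qlt: "Suc (pos s n) < n" using pt t by simp
  show ?thesis
  proof (rule top_site_condI[OF s n1 qlt])
    fix i j assume h: "i < j" "j < pos s n" and above: "\<And>k. pos s n < k \<Longrightarrow> k < n \<Longrightarrow> s!k < s!i"
    show "s!i < s!j"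
    proof (rule ccontr)
      assume "\<not> s!i < s!j"
      moreover have "s!i \<noteq> s!j" using perms_nth_inj[OF s, of i j] h pn by auto
      ultimately have "s!j < s!i" by simp
      moreover have "s!i \<noteq> n" using perms_nth_inj[OF s, of i "pos s n"] pn h by auto
      then have "s!i < s!(pos s n)" using pf pn h by (simp add: le_neq_implies_less)
      moreover have "pos s n < Suc (pos s n)" "Suc (pos s n) < length s" using qlt pf by auto
      ultimately show False using B h above[of "Suc (pos s n)"] qlt unfolding avoids_B_def by blast
    qed
  qed
qed

lemma site_type_inj_B: "inj_on (site_type s) {t. t \<le> n \<and> active_B s n t}"
proof (rule inj_onI)
  fix t t' assume t: "t \<in> {t. t \<le> n \<and> active_B s n t}" and t': "t' \<in> {t. t \<le> n \<and> active_B s n t}"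
    and eq: "site_type s t = site_type s t'"
  show "t = t'"
  proof (cases "t = 0 \<or> t' = 0")
    case True
    then show ?thesis using eq site_type_None_iff by metis
  next
    case False
    then obtain l b where lb: "site_type s t = Some (l, b)"
      using site_type_Some[OF s, of t] t by auto
    show ?thesis
    proof (cases b)
      case True
      then show ?thesis using site_type_True_inj[OF s, of t t' l] lb eq t t' False by simp
    next
      case False
      \<comment> \<open>the letter at a descent site exceeds the prefix maximum, so no later site has the same type\<close>
      have no_later: "False" if "a \<in> {t. t \<le> n \<and> active_B s n t}" "a' \<le> n" "0 < a" "a < a'"
        "site_type s a = Some (l, False)" "site_type s a' = Some (l, False)" for a a'
      proof -
        have "l < s!a" using descent_site_B[of a l] that by simp
        moreover have "s!a \<in> set (take a' s)"
          using that set_take_nth[of a' s] permsD(1)[OF s] by auto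
        then have "s!a \<le> Max (set (take a' s))" by simp
        moreover have "Max (set (take a' s)) = l" using that(4,6) unfolding site_type_def by auto
        ultimately show False by simp
      qed
      have "site_type s t = Some (l, False)" "site_type s t' = Some (l, False)"
        using lb eq False by auto
      moreover have "0 < t" "0 < t'" using \<open>\<not> (t = 0 \<or> t' = 0)\<close> by auto
      ultimately show ?thesis
        using no_later[of t t'] no_later[of t' t] t t' by (cases t t' rule: linorder_cases) auto
    qed
  qed
qed

lemma descent_site_B_exists:
  assumes i: "lrmax_at s i" "i < pos s n" "s!(Suc i) < s!i"
  obtains t where "t < n" "active_B s n t" "site_type s t = Some (s!i, False)"
proof -
  note pf = permsD[OF s]
  \<comment> \<open>the site just before the first letter to the right of position i that exceeds s!i\<close>
  define t where "t = (LEAST k. i < k \<and> s!i < s!k)"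
  have "i < n" using i(2) pn by simp
  then have "s!i \<noteq> n" using perms_nth_inj[OF s _ pn(1)] pn(2) i(2) by auto
  then have "s!i < n" using pf(4)[OF \<open>i < n\<close>] by simp
  then have ex: "i < pos s n \<and> s!i < s!(pos s n)" using i(2) pn by simp
  have tP: "i < t \<and> s!i < s!t" unfolding t_def by (rule LeastI[of _ "pos s n"]) (use ex in simp)
  have "t \<le> pos s n" unfolding t_def by (rule Least_le) (use ex in simp)
  then have tn: "t < n" using pn by simp
  have ub: "s!k \<le> s!i" if "k < t" for k
  proof (cases "i < k")
    case True
    then show ?thesis using not_less_Least[of k "\<lambda>k. i < k \<and> s!i < s!k"] that
      unfolding t_def[symmetric] by simp
  next
    case False
    then show ?thesis using i(1) unfolding lrmax_at_def by (metis le_eq_less_or_eq not_less)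
  qed
  have sit: "Suc i < t" using tP i(3) by (cases "Suc i = t") auto
  then have "s!(t-1) \<noteq> s!i" using perms_nth_inj[OF s, of "t-1" i] tn by auto
  then have "site_type s t = Some (s!i, False)" using site_type_eq[OF s, of i t] ub tP tn by simp
  moreover have "active_B s n t" unfolding active_B_def
  proof
    assume "\<exists>i' j l'. i'<j \<and> j<t \<and> t\<le>l' \<and> l'<n \<and> s!j<s!i' \<and> s!l'<s!i'"
    then obtain i' j l' where h: "i'<j" "j<t" "t\<le>l'" "l'<n" "s!j<s!i'" "s!l'<s!i'" by blast
    have "s!i' < s!t" using ub[of i'] h tP by simp
    then have "t < l'" using h by (cases "t = l'") auto
    then show False using B h \<open>s!i' < s!t\<close> pf unfolding avoids_B_def by blast
  qed
  ultimately show ?thesis using that tn by blast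
qed

lemma site_types_subset_B: "site_types n (stats s) \<subseteq> site_type s ` {t. t \<le> n \<and> active_B s n t}"
proof
  note pf = permsD[OF s]
  fix d assume d: "d \<in> site_types n (stats s)"
  obtain t where "t \<le> n" "active_B s n t" "site_type s t = d"
    using d
  proof (cases rule: site_types_cases)
    case 1
    then show ?thesis using that[of 0] by (simp add: active_B_def site_type_None_iff)
  next
    case (2 l)
    note lp = lrmax_at_pos[OF s 2(2)]
    have "active_B s n (Suc (pos s l))" using active_B_lrmax lp by simp
    moreover have "Suc (pos s l) \<le> n" using lp pf unfolding lrmax_at_def by simp
    moreover have "site_type s (Suc (pos s l)) = d" using site_type_lrmax[OF s] lp 2 by simp
    ultimately show ?thesis using that by blast
  next
    case (3 l)
    then obtain i where "l = s!i" "lrmax_at s i" "i < pos s n" "s!(Suc i) < s!i"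
      using Br_less_n_obtain[OF s n1] by blast
    then show ?thesis using descent_site_B_exists that 3 by (metis less_imp_le)
  next
    case 4
    interpret T: top_site s n using s n1 4(2) by unfold_locales
    have "s!k \<le> s!(pos s n)" if "k < n" for k using pf pn that by simp
    moreover have "s!(n-1) \<noteq> s!(pos s n)"
      using T.Suc_pos_n_less perms_nth_inj[OF s, of "n-1" "pos s n"] pn n1 by fastforce
    ultimately have "site_type s n = d" using site_type_eq[OF s, of "pos s n" n] pn 4 by simp
    then show ?thesis using that[of n] unfolding active_B_def by auto
  qed
  then show "d \<in> site_type s ` {t. t \<le> n \<and> active_B s n t}" by blast
qed

lemma site_type_bij_B: "bij_betw (site_type s) {t. t \<le> n \<and> active_B s n t} (site_types n (stats s))"
proof -
  have "site_type s ` {t. t \<le> n \<and> active_B s n t} \<subseteq> site_types n (stats s)"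
  proof
    fix d assume "d \<in> site_type s ` {t. t \<le> n \<and> active_B s n t}"
    then obtain t where t: "t \<le> n" "active_B s n t" "d = site_type s t" by blast
    have "top_site_cond n (stats s)" if "site_type s t = Some (n, False)"
      using top_site_B[of t] t that site_type_None_iff[of s t] by (cases "t = 0") auto
    then show "d \<in> site_types n (stats s)" using site_type_in_site_types[OF s t(1)] t by blast
  qed
  then show ?thesis
    unfolding bij_betw_def using site_type_inj_B site_types_subset_B by blast
qed

end

section \<open>Counting by statistics\<close>

definition children_count :: "nat \<Rightarrow> stat \<Rightarrow> stat \<Rightarrow> nat" where
  "children_count n v u = card {d \<in> site_types n u. child_stats n u d = v}"

lemma card_children_stats:
  assumes s: "s \<in> perms n" and n1: "1 \<le> n" and bij: "bij_betw (site_type s) V (site_types n (stats s))" and V: "V \<subseteq> {..n}"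
  shows "card {t\<in>V. stats (insert_at (Suc n) s t) = v} = children_count n v (stats s)"
proof -
  have e1: "{t\<in>V. stats (insert_at (Suc n) s t) = v} = {t\<in>V. child_stats n (stats s) (site_type s t) = v}"
    using stats_insert_at[OF s n1] V by auto
  have b: "bij_betw (site_type s) {t\<in>V. child_stats n (stats s) (site_type s t) = v} {d \<in> site_types n (stats s). child_stats n (stats s) d = v}"
  proof -
    have "inj_on (site_type s) V" using bij by (simp add: bij_betw_def)
    hence i: "inj_on (site_type s) {t\<in>V. child_stats n (stats s) (site_type s t) = v}"
      by (rule inj_on_subset) auto
    have e: "site_type s ` V = site_types n (stats s)" using bij unfolding bij_betw_def by blast
    have "site_type s ` {t\<in>V. child_stats n (stats s) (site_type s t) = v} = {d \<in> site_type s ` V. child_stats n (stats s) d = v}" by blast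
    hence im: "site_type s ` {t\<in>V. child_stats n (stats s) (site_type s t) = v} = {d \<in> site_types n (stats s). child_stats n (stats s) d = v}"
      unfolding e .
    show ?thesis unfolding bij_betw_def using i im by blast
  qed
  show ?thesis unfolding children_count_def e1 by (rule bij_betw_same_card[OF b])
qed

lemma perms_Suc_eq_image:
  assumes "\<And>s t. s \<in> perms n \<Longrightarrow> t \<le> n \<Longrightarrow> P (insert_at (Suc n) s t) \<longleftrightarrow> P s \<and> active s t"
  shows "{q \<in> perms (Suc n). P q} =
    (\<lambda>(s,t). insert_at (Suc n) s t) ` (SIGMA s:{s\<in>perms n. P s}. {t. t \<le> n \<and> active s t})"
proof (rule set_eqI, rule iffI)
  fix q assume "q \<in> {q \<in> perms (Suc n). P q}"
  then obtain s t where st: "s \<in> perms n" "t \<le> n" "q = insert_at (Suc n) s t" "P q"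
    using perms_Suc_insert_at by blast
  then have "(s, t) \<in> (SIGMA s:{s\<in>perms n. P s}. {t. t \<le> n \<and> active s t})" using assms by simp
  then show "q \<in> (\<lambda>(s,t). insert_at (Suc n) s t) ` (SIGMA s:{s\<in>perms n. P s}. {t. t \<le> n \<and> active s t})"
    using st(3) by (simp add: image_iff) blast
next
  fix q assume "q \<in> (\<lambda>(s,t). insert_at (Suc n) s t) ` (SIGMA s:{s\<in>perms n. P s}. {t. t \<le> n \<and> active s t})"
  then show "q \<in> {q \<in> perms (Suc n). P q}" using assms insert_at_perms by auto
qed

lemma insert_at_inj_on: "inj_on (\<lambda>(s,t). insert_at (Suc n) s t) (SIGMA s:perms n. {..n})"
proof (rule inj_onI, clarsimp)
  fix s t s' t' assume "s \<in> perms n" "t \<le> n" "s' \<in> perms n" "t' \<le> n" "insert_at (Suc n) s t = insert_at (Suc n) s' t'"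
  moreover have "Suc n \<notin> set s" "Suc n \<notin> set s'" using calculation unfolding perms_def by auto
  ultimately show "s = s' \<and> t = t'" using insert_at_inj[of "Suc n" s s' t t'] length_perms by metis
qed

lemma card_stats_Suc:
  assumes n1: "1 \<le> n"
    and P: "\<And>s t. s \<in> perms n \<Longrightarrow> t \<le> n \<Longrightarrow> P (insert_at (Suc n) s t) \<longleftrightarrow> P s \<and> active s t"
    and bij: "\<And>s. s \<in> perms n \<Longrightarrow> P s \<Longrightarrow>
      bij_betw (site_type s) {t. t \<le> n \<and> active s t} (site_types n (stats s))"
  shows "card {q \<in> perms (Suc n). P q \<and> stats q = v} = (\<Sum>s\<in>{s\<in>perms n. P s}. children_count n v (stats s))"
proof -
  let ?V = "\<lambda>s. {t. t \<le> n \<and> active s t}"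
  let ?S = "SIGMA s:{s\<in>perms n. P s}. ?V s"
  let ?h = "\<lambda>(s,t). insert_at (Suc n) s t"
  have Vsub: "?V s \<subseteq> {..n}" for s by auto
  have "?S \<subseteq> (SIGMA s:perms n. {..n})" by auto
  then have inj: "inj_on ?h ?S" using insert_at_inj_on[of n] inj_on_subset by blast
  have "{q \<in> perms (Suc n). P q \<and> stats q = v} = {q \<in> ?h ` ?S. stats q = v}"
    using perms_Suc_eq_image[OF P] by blast
  also have "\<dots> = ?h ` {x \<in> ?S. stats (?h x) = v}" by blast
  finally have "{q \<in> perms (Suc n). P q \<and> stats q = v} = ?h ` {x \<in> ?S. stats (?h x) = v}" .
  then have "card {q \<in> perms (Suc n). P q \<and> stats q = v} = card {x \<in> ?S. stats (?h x) = v}"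
    using card_image inj_on_subset[OF inj] by (metis (no_types, lifting) mem_Collect_eq subsetI)
  also have "{x \<in> ?S. stats (?h x) = v} = (SIGMA s:{s\<in>perms n. P s}. {t \<in> ?V s. stats (insert_at (Suc n) s t) = v})"
    by auto
  also have "card \<dots> = (\<Sum>s\<in>{s\<in>perms n. P s}. card {t \<in> ?V s. stats (insert_at (Suc n) s t) = v})"
  proof (rule card_SigmaI)
    show "finite {s\<in>perms n. P s}" using perms_finite by simp
    show "\<forall>s\<in>{s\<in>perms n. P s}. finite {t \<in> ?V s. stats (insert_at (Suc n) s t) = v}"
      using finite_subset[OF _ finite_atMost[of n]] by auto
  qed
  also have "\<dots> = (\<Sum>s\<in>{s\<in>perms n. P s}. children_count n v (stats s))"
    using card_children_stats[OF _ n1 bij Vsub] by (intro sum.cong) auto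
  finally show ?thesis .
qed

lemma sum_by_fibres:
  fixes X :: "'a set" and f :: "'a \<Rightarrow> 'b" and g :: "'b \<Rightarrow> nat"
  assumes "finite X"
  shows "(\<Sum>x\<in>X. g (f x)) = (\<Sum>u\<in>f ` X. card {x\<in>X. f x = u} * g u)"
proof -
  have "(\<Sum>x\<in>X. g (f x)) = (\<Sum>u\<in>f ` X. \<Sum>x\<in>{x. x \<in> X \<and> f x = u}. g (f x))"
    by (rule sum.image_gen[OF assms])
  also have "\<dots> = (\<Sum>u\<in>f ` X. card {x\<in>X. f x = u} * g u)"
    by (rule sum.cong) auto
  finally show ?thesis .
qed

lemma sum_equal_fibers:
  fixes X Y :: "'a set" and f :: "'a \<Rightarrow> 'b" and g :: "'b \<Rightarrow> nat"
  assumes X: "finite X" and Y: "finite Y" and c: "\<And>u. card {x\<in>X. f x = u} = card {x\<in>Y. f x = u}"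
  shows "(\<Sum>x\<in>X. g (f x)) = (\<Sum>x\<in>Y. g (f x))"
proof -
  have im: "f ` X = f ` Y"
  proof -
    have "u \<in> f ` X \<longleftrightarrow> card {x\<in>X. f x = u} > 0" for u using X by (auto simp: card_gt_0_iff)
    moreover have "u \<in> f ` Y \<longleftrightarrow> card {x\<in>Y. f x = u} > 0" for u using Y by (auto simp: card_gt_0_iff)
    ultimately show ?thesis using c by (intro set_eqI) simp
  qed
  show ?thesis unfolding sum_by_fibres[OF X] sum_by_fibres[OF Y] im c ..
qed

lemma card_stats_A_eq_B:
  assumes "1 \<le> n"
  shows "card {q \<in> perms n. avoids_A q \<and> stats q = v} = card {q \<in> perms n. avoids_B q \<and> stats q = v}"
  using assms
proof (induction n arbitrary: v rule: dec_induct)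
  case base
  have "avoids_A q \<and> avoids_B q" if "q \<in> perms 1" for q
    using length_perms[OF that] unfolding avoids_A_def avoids_B_def by auto
  then show ?case by (metis (mono_tags, lifting))
next
  case (step n)
  have "card {q \<in> perms (Suc n). avoids_A q \<and> stats q = v} =
      (\<Sum>s\<in>{s\<in>perms n. avoids_A s}. children_count n v (stats s))"
    using card_stats_Suc[OF step.hyps(1) insertion.avoids_A_insert_at[OF insertion.intro]
        A_parent.site_type_bij_A[OF A_parent.intro[OF _ step.hyps(1)]]] .
  moreover have "card {q \<in> perms (Suc n). avoids_B q \<and> stats q = v} =
      (\<Sum>s\<in>{s\<in>perms n. avoids_B s}. children_count n v (stats s))"
    using card_stats_Suc[OF step.hyps(1) insertion.avoids_B_insert_at[OF insertion.intro]
        B_parent.site_type_bij_B[OF B_parent.intro[OF _ step.hyps(1)]]] .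
  moreover have "(\<Sum>s\<in>{s\<in>perms n. avoids_A s}. children_count n v (stats s)) =
      (\<Sum>s\<in>{s\<in>perms n. avoids_B s}. children_count n v (stats s))"
  proof (rule sum_equal_fibers[where f = stats and g = "children_count n v"])
    fix u
    have "{s \<in> {s\<in>perms n. avoids_A s}. stats s = u} = {q \<in> perms n. avoids_A q \<and> stats q = u}"
      "{s \<in> {s\<in>perms n. avoids_B s}. stats s = u} = {q \<in> perms n. avoids_B q \<and> stats q = u}"
      by auto
    then show "card {s \<in> {s\<in>perms n. avoids_A s}. stats s = u} = card {s \<in> {s\<in>perms n. avoids_B s}. stats s = u}"
      using step.IH by simp
  qed (use perms_finite in simp_all)
  ultimately show ?case by simp
qed

lemma fibrewise_bij_betw:
  assumes "finite A" "finite B" "\<And>v. card {x\<in>A. f x = v} = card {y\<in>B. f y = v}"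
  shows "\<exists>\<phi>. bij_betw \<phi> A B \<and> (\<forall>x\<in>A. f (\<phi> x) = f x)"
proof -
  have "\<forall>v. \<exists>h. bij_betw h {x\<in>A. f x = v} {y\<in>B. f y = v}"
    using assms by (intro allI finite_same_card_bij) auto
  then obtain h where h: "\<And>v. bij_betw (h v) {x\<in>A. f x = v} {y\<in>B. f y = v}"
    by metis
  define \<phi> where "\<phi> x = h (f x) x" for x
  have maps: "\<phi> x \<in> B \<and> f (\<phi> x) = f x" if "x \<in> A" for x
    using bij_betwE[OF h[of "f x"]] that unfolding \<phi>_def by blast
  have "inj_on \<phi> A"
  proof (rule inj_onI)
    fix x y assume "x \<in> A" "y \<in> A" "\<phi> x = \<phi> y"
    then have "f x = f y" using maps by metis
    then show "x = y"
      using bij_betw_imp_inj_on[OF h[of "f x"]] \<open>x \<in> A\<close> \<open>y \<in> A\<close> \<open>\<phi> x = \<phi> y\<close>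
      unfolding \<phi>_def by (auto dest: inj_onD)
  qed
  moreover have "B \<subseteq> \<phi> ` A"
  proof
    fix y assume "y \<in> B"
    then obtain x where "x \<in> A" "f x = f y" "y = h (f y) x"
      using bij_betw_imp_surj_on[OF h[of "f y"]] by blast
    then have "y = \<phi> x" unfolding \<phi>_def by simp
    then show "y \<in> \<phi> ` A" using \<open>x \<in> A\<close> by blast
  qed
  ultimately show ?thesis using maps unfolding bij_betw_def by blast
qed

theorem theorem2p1:
  fixes n :: nat
  assumes "n \<ge> 1"
  shows "\<exists>\<phi>. bij_betw \<phi> (avoids_all n [[3,1,2,4],[3,2,1,4]]) (avoids_all n [[3,1,4,2],[3,2,4,1]])
           \<and> (\<forall>\<pi>\<in>avoids_all n [[3,1,2,4],[3,2,1,4]].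
                 (Br \<pi>, Ides \<pi>, Lrmax \<pi>, Lrmin \<pi>, Iar \<pi>)
               = (Br (\<phi> \<pi>), Ides (\<phi> \<pi>), Lrmax (\<phi> \<pi>), Lrmin (\<phi> \<pi>), Iar (\<phi> \<pi>)))"
proof -
  let ?A = "avoids_all n [[3,1,2,4],[3,2,1,4]]" and ?B = "avoids_all n [[3,1,4,2],[3,2,4,1]]"
  have "finite ?A" "finite ?B"
    using perms_finite unfolding avoids_all_def by auto
  moreover have "card {\<pi>\<in>?A. stats \<pi> = v} = card {\<pi>\<in>?B. stats \<pi> = v}" for v
  proof -
    have "{\<pi>\<in>?A. stats \<pi> = v} = {\<pi>\<in>perms n. avoids_A \<pi> \<and> stats \<pi> = v}"
      "{\<pi>\<in>?B. stats \<pi> = v} = {\<pi>\<in>perms n. avoids_B \<pi> \<and> stats \<pi> = v}"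
      using avoids_all_A_iff avoids_all_B_iff by blast+
    then show ?thesis using card_stats_A_eq_B[OF assms] by simp
  qed
  ultimately obtain \<phi> where "bij_betw \<phi> ?A ?B" "\<forall>\<pi>\<in>?A. stats (\<phi> \<pi>) = stats \<pi>"
    using fibrewise_bij_betw by blast
  then show ?thesis unfolding stats_def by auto
qed

end
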